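(* Let $\mathcal{R}$ be a left-linear TRS and $\mathcal{C}\subseteq\mathcal{R}$ such that $t\leftrightarrow^*_\mathcal{C}u$ for every parallel critical pair $(t,u)$ between $\mathcal{R}$ and $\mathcal{R}$, and $\ell\to_\mathcal{C}^*r$ for every rule $\ell\to r\in\mathcal{R}{\restriction}_\mathcal{C}$. Then $\mathcal{R}$ is confluent if and only if $\mathcal{C}$ is confluent.
   Context: A TRS is a set of rules $\ell\to r$ ($\ell\notin\mathcal{V}$, $\mathcal{V}ar(r)\subseteq\mathcal{V}ar(\ell)$); left-linear: no variable repeated in a left-hand side; confluent: ${}\leftarrow^*\cdot\to^*\subseteq\to^*\cdot\leftarrow^*$; $\leftrightarrow^*_\mathcal{C}$ the conversion relation of $\mathcal{C}$. $\mathcal{F}un(\mathcal{C})$ is the set of function symbols occurring in rules of $\mathcal{C}$, and $\mathcal{R}{\restriction}_\mathcal{C}=\{\ell\to r\in\mathcal{R}\mid\mathcal{F}un(\ell)\subseteq\mathcal{F}un(\mathcal{C})\}$. Parallel critical pair between $\mathcal{R}$ and $\mathcal{R}$: for variants (renamings) $\ell\to r$ and $\ell_p\to r_p$ ($p\in P$) of $\mathcal{R}$-rules, pairwise variable-disjoint, where $P$ is a non-empty set of pairwise parallel (no one a prefix of another) function-symbol positions of $\ell$, $\sigma$ a most general unifier of $\{\ell_p\approx\ell|_p\}_{p\in P}$, and $\ell_\epsilon\to r_\epsilon$ not a variant of $\ell\to r$ if $P=\{\epsilon\}$ (root): the pair $((\ell\sigma)[r_p\sigma]_{p\in P}, r\sigma)$.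 *)

theory Defs
  imports Main
begin

datatype ('f, 'v) "term" = Var 'v | Fun 'f "('f, 'v) term list"

type_synonym ('f, 'v) rule = "('f, 'v) term \<times> ('f, 'v) term"
type_synonym ('f, 'v) trs = "('f, 'v) rule set"
type_synonym pos = "nat list"

fun vars_term :: "('f, 'v) term \<Rightarrow> 'v set" where
  "vars_term (Var x) = {x}"
| "vars_term (Fun f ts) = \<Union> (set (map vars_term ts))"

fun funs_term :: "('f, 'v) term \<Rightarrow> 'f set" where
  "funs_term (Var x) = {}"
| "funs_term (Fun f ts) = insert f (\<Union> (set (map funs_term ts)))"

fun subst :: "('f, 'v) term \<Rightarrow> ('v \<Rightarrow> ('f, 'v) term) \<Rightarrow> ('f, 'v) term" where
  "subst (Var x) \<sigma> = \<sigma> x"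
| "subst (Fun f ts) \<sigma> = Fun f (map (\<lambda>t. subst t \<sigma>) ts)"

fun valid_pos :: "('f, 'v) term \<Rightarrow> pos \<Rightarrow> bool" where
  "valid_pos t [] = True"
| "valid_pos (Var x) (i # p) = False"
| "valid_pos (Fun f ts) (i # p) = (i < length ts \<and> valid_pos (ts ! i) p)"

definition poss :: "('f, 'v) term \<Rightarrow> pos set" where
  "poss t = {p. valid_pos t p}"

fun subt_at :: "('f, 'v) term \<Rightarrow> pos \<Rightarrow> ('f, 'v) term" where
  "subt_at t [] = t"
| "subt_at (Var x) (i # p) = Var x"
| "subt_at (Fun f ts) (i # p) = subt_at (ts ! i) p"

definition fun_poss :: "('f, 'v) term \<Rightarrow> pos set" where
  "fun_poss t = {p \<in> poss t. \<not> (\<exists>x. subt_at t p = Var x)}"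

fun replace_at :: "('f, 'v) term \<Rightarrow> pos \<Rightarrow> ('f, 'v) term \<Rightarrow> ('f, 'v) term" where
  "replace_at t [] s = s"
| "replace_at (Var x) (i # p) s = Var x"
| "replace_at (Fun f ts) (i # p) s = Fun f (ts[i := replace_at (ts ! i) p s])"

fun replace_par :: "('f, 'v) term \<Rightarrow> pos set \<Rightarrow> (pos \<Rightarrow> ('f, 'v) term) \<Rightarrow> ('f, 'v) term"
and replace_par_list :: "nat \<Rightarrow> ('f, 'v) term list \<Rightarrow> pos set \<Rightarrow> (pos \<Rightarrow> ('f, 'v) term)
    \<Rightarrow> ('f, 'v) term list" where
  "replace_par (Var x) P g = (if [] \<in> P then g [] else Var x)"
| "replace_par (Fun f ts) P g = (if [] \<in> P then g [] else Fun f (replace_par_list 0 ts P g))"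
| "replace_par_list i [] P g = []"
| "replace_par_list i (t # ts) P g =
     replace_par t {q. i # q \<in> P} (\<lambda>q. g (i # q)) # replace_par_list (Suc i) ts P g"

definition pos_prefix :: "pos \<Rightarrow> pos \<Rightarrow> bool" where
  "pos_prefix p q \<longleftrightarrow> (\<exists>r. q = p @ r)"

definition parallel_pos :: "pos \<Rightarrow> pos \<Rightarrow> bool" where
  "parallel_pos p q \<longleftrightarrow> \<not> pos_prefix p q \<and> \<not> pos_prefix q p"

definition rule_vars :: "('f, 'v) rule \<Rightarrow> 'v set" where
  "rule_vars lr = vars_term (fst lr) \<union> vars_term (snd lr)"

definition is_trs :: "('f, 'v) trs \<Rightarrow> bool" where
  "is_trs R \<longleftrightarrow> (\<forall>(l, r) \<in> R. (\<nexists>x. l = Var x) \<and> vars_term r \<subseteq> vars_term l)"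

definition left_linear :: "('f, 'v) trs \<Rightarrow> bool" where
  "left_linear R \<longleftrightarrow> (\<forall>(l, r) \<in> R. \<forall>p \<in> poss l. \<forall>q \<in> poss l. \<forall>x.
      subt_at l p = Var x \<and> subt_at l q = Var x \<longrightarrow> p = q)"

definition rstep :: "('f, 'v) trs \<Rightarrow> ('f, 'v) term rel" where
  "rstep R = {(s, t). \<exists>l r p \<sigma>. (l, r) \<in> R \<and> p \<in> poss s \<and>
      subt_at s p = subst l \<sigma> \<and> t = replace_at s p (subst r \<sigma>)}"

definition conv :: "('f, 'v) trs \<Rightarrow> ('f, 'v) term rel" where
  "conv R = (rstep R \<union> (rstep R)\<inverse>)\<^sup>*"

definition confluent :: "('f, 'v) trs \<Rightarrow> bool" where
  "confluent R \<longleftrightarrow> ((rstep R)\<^sup>*)\<inverse> O (rstep R)\<^sup>* \<subseteq> (rstep R)\<^sup>* O ((rstep R)\<^sup>*)\<inverse>"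

definition funs_trs :: "('f, 'v) trs \<Rightarrow> 'f set" where
  "funs_trs R = (\<Union>(l, r) \<in> R. funs_term l \<union> funs_term r)"

definition restrict_trs :: "('f, 'v) trs \<Rightarrow> ('f, 'v) trs \<Rightarrow> ('f, 'v) trs" where
  "restrict_trs R C = {(l, r) \<in> R. funs_term l \<subseteq> funs_trs C}"

definition variant :: "('f, 'v) rule \<Rightarrow> ('f, 'v) rule \<Rightarrow> bool" where
  "variant lr' lr \<longleftrightarrow> (\<exists>\<pi>. bij \<pi> \<and> fst lr' = subst (fst lr) (Var \<circ> \<pi>)
                                 \<and> snd lr' = subst (snd lr) (Var \<circ> \<pi>))"

definition is_unifier :: "('v \<Rightarrow> ('f, 'v) term) \<Rightarrow> ('f, 'v) term rel \<Rightarrow> bool" where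
  "is_unifier \<sigma> E \<longleftrightarrow> (\<forall>(s, t) \<in> E. subst s \<sigma> = subst t \<sigma>)"

definition is_mgu :: "('v \<Rightarrow> ('f, 'v) term) \<Rightarrow> ('f, 'v) term rel \<Rightarrow> bool" where
  "is_mgu \<sigma> E \<longleftrightarrow> is_unifier \<sigma> E \<and>
     (\<forall>\<tau>. is_unifier \<tau> E \<longrightarrow> (\<exists>\<delta>. \<forall>x. \<tau> x = subst (\<sigma> x) \<delta>))"

text \<open>Parallel critical pairs between R and R: main rule (l,r), rules rho p at positions p in P.\<close>
definition pcps :: "('f, 'v) trs \<Rightarrow> ('f, 'v) term rel" where
  "pcps R = {(replace_par (subst l \<sigma>) P (\<lambda>p. subst (snd (\<rho> p)) \<sigma>), subst r \<sigma>) | l r P \<rho> \<sigma>.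
      (\<exists>lr0 \<in> R. variant (l, r) lr0) \<and>
      (\<forall>p \<in> P. \<exists>lr0 \<in> R. variant (\<rho> p) lr0) \<and>
      (\<forall>p \<in> P. rule_vars (\<rho> p) \<inter> rule_vars (l, r) = {}) \<and>
      (\<forall>p \<in> P. \<forall>q \<in> P. p \<noteq> q \<longrightarrow> rule_vars (\<rho> p) \<inter> rule_vars (\<rho> q) = {}) \<and>
      P \<noteq> {} \<and> P \<subseteq> fun_poss l \<and>
      (\<forall>p \<in> P. \<forall>q \<in> P. p \<noteq> q \<longrightarrow> parallel_pos p q) \<and>
      is_mgu \<sigma> {(fst (\<rho> p), subt_at l p) | p. p \<in> P} \<and>
      (P = {[]} \<longrightarrow> \<not> variant (\<rho> []) (l, r))}"

end

(*
  If C is confluent, a peak of parallel R-steps is closed by parallel R-steps and a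
  C-conversion: where a contracted redex of one step overlaps function positions of a
  left-hand side contracted at the root by the other, the overlapping redexes are, after
  renaming the rules apart (here the infinite supply of variables is used), an instance of a
  parallel critical pair; otherwise, by left-linearity, the root redex survives the other step.
  Hence the composition of a parallel R-step with C-steps has the diamond property, and it
  generates the same reachability relation as R.

  Conversely, if R is confluent then C is confluent on terms over the function symbols of C,
  since there every R-step is simulated by C-steps. A general term is a C-context whose holes
  carry alien subterms. Steps in the context project to steps on the context, and steps inside
  the aliens are confluent by induction on the nesting depth of aliens; by left-linearity of C
  the two kinds of steps commute, which gives confluence of C.
*)

theory Submission
  imports Defs
begin

section \<open>Substitutions and rewrite steps\<close>

lemma subst_subst: "subst (subst t \<sigma>) \<tau> = subst t (\<lambda>x. subst (\<sigma> x) \<tau>)"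
  by (induction t) auto

lemma subst_cong: "(\<And>x. x \<in> vars_term t \<Longrightarrow> \<sigma> x = \<tau> x) \<Longrightarrow> subst t \<sigma> = subst t \<tau>"
  by (induction t) auto

lemma subst_eq_imp_eq_on_vars: "subst t \<sigma> = subst t \<tau> \<Longrightarrow> x \<in> vars_term t \<Longrightarrow> \<sigma> x = \<tau> x"
  by (induction t) auto

lemma subst_Var [simp]: "subst t Var = t"
  by (induction t) (auto simp: map_idI)

lemma vars_term_subst: "vars_term (subst t \<sigma>) = (\<Union>x\<in>vars_term t. vars_term (\<sigma> x))"
  by (induction t) auto

lemma funs_term_subst: "funs_term (subst t \<sigma>) = funs_term t \<union> (\<Union>x\<in>vars_term t. funs_term (\<sigma> x))"
  by (induction t) auto

lemma finite_vars_term [simp]: "finite (vars_term t)"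
  by (induction t) auto

lemma size_subst_ge_Var: "x \<in> vars_term t \<Longrightarrow> size (\<sigma> x) \<le> size (subst t \<sigma>)"
proof (induction t)
  case (Fun f ts)
  then obtain u where u: "u \<in> set ts" "x \<in> vars_term u" by auto
  with Fun have "size (\<sigma> x) \<le> size (subst u \<sigma>)" by auto
  also have "\<dots> \<le> size_list size (map (\<lambda>t. subst t \<sigma>) ts)"
    using u(1) by (simp add: size_list_estimation')
  finally show ?case by simp
qed simp

lemma subst_neq_Var_if_occurs: "x \<in> vars_term t \<Longrightarrow> t \<noteq> Var x \<Longrightarrow> subst t \<sigma> \<noteq> \<sigma> x"
proof (cases t)
  case (Fun f ts)
  assume "x \<in> vars_term t"
  with Fun obtain u where u: "u \<in> set ts" "x \<in> vars_term u" by auto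
  have "size (\<sigma> x) \<le> size (subst u \<sigma>)" using size_subst_ge_Var[OF u(2)] .
  also have "\<dots> \<le> size_list size (map (\<lambda>t. subst t \<sigma>) ts)"
    using u(1) by (simp add: size_list_estimation')
  finally have "size (\<sigma> x) < size (subst t \<sigma>)" using Fun by simp
  then show "subst t \<sigma> \<noteq> \<sigma> x" by auto
qed simp

inductive rstepp :: "('f, 'v) trs \<Rightarrow> ('f, 'v) term \<Rightarrow> ('f, 'v) term \<Rightarrow> bool" for R where
  root: "(l, r) \<in> R \<Longrightarrow> rstepp R (subst l \<sigma>) (subst r \<sigma>)"
| ctxt: "i < length ts \<Longrightarrow> rstepp R (ts ! i) t \<Longrightarrow> rstepp R (Fun f ts) (Fun f (ts[i := t]))"

lemma rstep_eq_rstepp: "rstep R = {(s, t). rstepp R s t}"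
proof (intro set_eqI iffI; clarify)
  fix s t assume "(s, t) \<in> rstep R"
  then obtain l r p \<sigma> where lr: "(l, r) \<in> R" and p: "p \<in> poss s" "subt_at s p = subst l \<sigma>"
    and t: "t = replace_at s p (subst r \<sigma>)" unfolding rstep_def by blast
  from p t show "rstepp R s t"
  proof (induction p arbitrary: s t)
    case Nil then show ?case using rstepp.root[OF lr] by simp
  next
    case (Cons i q)
    then obtain f ts where "s = Fun f ts" by (cases s) (auto simp: poss_def)
    with Cons show ?case by (auto simp: poss_def intro!: rstepp.ctxt)
  qed
next
  fix s t assume "rstepp R s t"
  then show "(s, t) \<in> rstep R"
  proof induction
    case (root l r \<sigma>)
    then show ?case unfolding rstep_def
      by (intro CollectI case_prodI exI[of _ l] exI[of _ r] exI[of _ "[]"] exI[of _ \<sigma>])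
        (auto simp: poss_def)
  next
    case (ctxt i ts t f)
    then obtain l r p \<sigma> where lr: "(l, r) \<in> R" and p: "p \<in> poss (ts!i)"
      "subt_at (ts!i) p = subst l \<sigma>" and t: "t = replace_at (ts!i) p (subst r \<sigma>)"
      unfolding rstep_def by blast
    show ?case unfolding rstep_def using ctxt(1) lr p t
      by (intro CollectI case_prodI exI[of _ l] exI[of _ r] exI[of _ "i # p"] exI[of _ \<sigma>])
        (auto simp: poss_def)
  qed
qed

lemma rstepp_subst: "rstepp R s t \<Longrightarrow> rstepp R (subst s \<delta>) (subst t \<delta>)"
proof (induction rule: rstepp.induct)
  case (root l r \<sigma>)
  then show ?case using rstepp.root[OF root, of "\<lambda>x. subst (\<sigma> x) \<delta>"] by (simp add: subst_subst)
next
  case (ctxt i ts t f)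
  then show ?case using rstepp.ctxt[of i "map (\<lambda>t. subst t \<delta>) ts" R "subst t \<delta>" f]
    by (simp add: map_update)
qed

lemma rstepp_mono: "rstepp R s t \<Longrightarrow> R \<subseteq> S \<Longrightarrow> rstepp S s t"
  by (induction rule: rstepp.induct) (auto intro: rstepp.intros)

lemma rstep_mono: "C \<subseteq> R \<Longrightarrow> rstep C \<subseteq> rstep R"
  by (auto simp: rstep_eq_rstepp intro: rstepp_mono)

lemma rsteps_subst: "(s, t) \<in> (rstep R)\<^sup>* \<Longrightarrow> (subst s \<delta>, subst t \<delta>) \<in> (rstep R)\<^sup>*"
proof (induction rule: rtrancl_induct)
  case (step y z)
  then have "(subst y \<delta>, subst z \<delta>) \<in> rstep R" by (simp add: rstep_eq_rstepp rstepp_subst)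
  with step(3) show ?case by simp
qed simp

lemma Fun_arg_rtrancl:
  assumes ctxt: "\<And>ts i t. i < length ts \<Longrightarrow> (ts ! i, t) \<in> S \<Longrightarrow> (Fun f ts, Fun f (ts[i := t])) \<in> S'"
  shows "(a, b) \<in> S\<^sup>* \<Longrightarrow> i < length ts \<Longrightarrow> ts ! i = a \<Longrightarrow> (Fun f ts, Fun f (ts[i := b])) \<in> S'\<^sup>*"
proof (induction rule: rtrancl_induct)
  case base then show ?case by (metis list_update_id rtrancl.rtrancl_refl)
next
  case (step y z)
  then have "(Fun f ts, Fun f (ts[i := y])) \<in> S'\<^sup>*" by simp
  moreover have "(Fun f (ts[i := y]), Fun f ((ts[i := y])[i := z])) \<in> S'"
    using step by (intro ctxt) auto
  ultimately show ?case by simp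
qed

lemma Fun_args_rtrancl:
  assumes ctxt: "\<And>ts i t. i < length ts \<Longrightarrow> (ts ! i, t) \<in> S \<Longrightarrow> (Fun f ts, Fun f (ts[i := t])) \<in> S'"
    and args: "list_all2 (\<lambda>a b. (a, b) \<in> S\<^sup>*) as bs"
  shows "(Fun f as, Fun f bs) \<in> S'\<^sup>*"
proof -
  have "(Fun f as, Fun f (take k bs @ drop k as)) \<in> S'\<^sup>*" if "k \<le> length as" for k
    using that
  proof (induction k)
    case (Suc k)
    have len: "length bs = length as" using args by (simp add: list_all2_lengthD)
    let ?ts = "take k bs @ drop k as"
    have "k < length ?ts" "?ts ! k = as ! k" using Suc.prems len by (auto simp: nth_append)
    moreover have "(as ! k, bs ! k) \<in> S\<^sup>*"
      using args Suc.prems by (auto simp: list_all2_conv_all_nth)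
    ultimately have "(Fun f ?ts, Fun f (?ts[k := bs ! k])) \<in> S'\<^sup>*"
      by (intro Fun_arg_rtrancl[OF ctxt]) auto
    moreover have "?ts[k := bs ! k] = take (Suc k) bs @ drop (Suc k) as"
      using Suc.prems len by (simp add: list_update_append take_Suc_conv_app_nth
          Cons_nth_drop_Suc[symmetric])
    ultimately show ?case using Suc by (metis Suc_leD rtrancl_trans)
  qed simp
  from this[of "length as"] show ?thesis using args by (simp add: list_all2_lengthD)
qed

lemma rtrancl_Fun_args_decomp:
  assumes decomp: "\<And>ts' y. (Fun f ts', y) \<in> S' \<Longrightarrow>
      \<exists>i t. i < length ts' \<and> (ts' ! i, t) \<in> S \<and> y = Fun f (ts'[i := t])"
  shows "(Fun f ts, y) \<in> S'\<^sup>* \<Longrightarrow> \<exists>ys. y = Fun f ys \<and> list_all2 (\<lambda>a b. (a, b) \<in> S\<^sup>*) ts ys"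
proof (induction rule: rtrancl_induct)
  case base then show ?case by (auto simp: list_all2_same)
next
  case (step y z)
  then obtain ys where ys: "y = Fun f ys" "list_all2 (\<lambda>a b. (a, b) \<in> S\<^sup>*) ts ys" by blast
  from decomp[of ys z] step(2) ys(1) obtain i t
    where it: "i < length ys" "(ys ! i, t) \<in> S" "z = Fun f (ys[i := t])" by blast
  have "list_all2 (\<lambda>a b. (a, b) \<in> S\<^sup>*) ts (ys[i := t])"
    using ys(2) it by (auto simp: list_all2_conv_all_nth nth_list_update)
  then show ?case using it(3) by blast
qed

lemma rsteps_arg: "(s, t) \<in> (rstep R)\<^sup>* \<Longrightarrow> i < length ts \<Longrightarrow> ts ! i = s \<Longrightarrow>
    (Fun f ts, Fun f (ts[i := t])) \<in> (rstep R)\<^sup>*"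
  by (rule Fun_arg_rtrancl) (auto simp: rstep_eq_rstepp intro: rstepp.ctxt)

lemma conv_refl [simp]: "(t, t) \<in> conv R"
  by (simp add: conv_def)

lemma conv_sym: "(s, t) \<in> conv R \<Longrightarrow> (t, s) \<in> conv R"
  unfolding conv_def
  by (metis converse_Un converse_converse rtrancl_converseI sup_commute)

lemma conv_trans: "(s, t) \<in> conv R \<Longrightarrow> (t, u) \<in> conv R \<Longrightarrow> (s, u) \<in> conv R"
  unfolding conv_def by simp

lemma rsteps_imp_conv: "(s, t) \<in> (rstep R)\<^sup>* \<Longrightarrow> (s, t) \<in> conv R"
  unfolding conv_def by (meson in_rtrancl_UnI)

lemma conv_subst: "(s, t) \<in> conv R \<Longrightarrow> (subst s \<delta>, subst t \<delta>) \<in> conv R"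
  unfolding conv_def
proof (induction rule: rtrancl_induct)
  case (step y z)
  then have "(subst y \<delta>, subst z \<delta>) \<in> rstep R \<union> (rstep R)\<inverse>"
    by (auto simp: rstep_eq_rstepp intro: rstepp_subst)
  with step show ?case by (meson rtrancl.simps)
qed simp

lemma conv_Fun_args: "list_all2 (\<lambda>a b. (a, b) \<in> conv R) as bs \<Longrightarrow> (Fun f as, Fun f bs) \<in> conv R"
  unfolding conv_def
proof (rule Fun_args_rtrancl)
  fix ts i t assume i: "i < length ts" and "(ts ! i, t) \<in> rstep R \<union> (rstep R)\<inverse>"
  then consider "rstepp R (ts ! i) t" | "rstepp R ((ts[i := t]) ! i) (ts ! i)"
    by (auto simp: rstep_eq_rstepp)
  then show "(Fun f ts, Fun f (ts[i := t])) \<in> rstep R \<union> (rstep R)\<inverse>"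
  proof cases
    case 2
    from rstepp.ctxt[OF _ this, of f] i show ?thesis by (simp add: rstep_eq_rstepp)
  qed (use i in \<open>auto simp: rstep_eq_rstepp intro: rstepp.ctxt\<close>)
qed

lemma confluent_join:
  assumes "confluent R" "(t, u) \<in> (rstep R)\<^sup>*" "(t, v) \<in> (rstep R)\<^sup>*"
  shows "\<exists>w. (u, w) \<in> (rstep R)\<^sup>* \<and> (v, w) \<in> (rstep R)\<^sup>*"
  using assms unfolding confluent_def by blast

lemma confluentI:
  assumes "\<And>t u v. (t, u) \<in> (rstep R)\<^sup>* \<Longrightarrow> (t, v) \<in> (rstep R)\<^sup>* \<Longrightarrow>
      \<exists>w. (u, w) \<in> (rstep R)\<^sup>* \<and> (v, w) \<in> (rstep R)\<^sup>*"
  shows "confluent R"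
  unfolding confluent_def using assms by blast

lemma confluent_conv_join:
  assumes "confluent R" "(s, t) \<in> conv R"
  shows "\<exists>u. (s, u) \<in> (rstep R)\<^sup>* \<and> (t, u) \<in> (rstep R)\<^sup>*"
  using assms(2) unfolding conv_def
proof (induction rule: rtrancl_induct)
  case (step y z)
  then obtain u where u: "(s, u) \<in> (rstep R)\<^sup>*" "(y, u) \<in> (rstep R)\<^sup>*" by blast
  from step(2) show ?case
  proof
    assume "(y, z) \<in> rstep R"
    with u(2) assms(1) obtain w where "(u, w) \<in> (rstep R)\<^sup>*" "(z, w) \<in> (rstep R)\<^sup>*"
      using confluent_join by (metis r_into_rtrancl)
    with u(1) show ?thesis by (meson rtrancl_trans)
  next
    assume "(y, z) \<in> (rstep R)\<inverse>"
    with u show ?thesis by (meson converseD converse_rtrancl_into_rtrancl)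
  qed
qed blast

lemma diamond_imp_confluent_on:
  assumes diamond: "\<And>a b c. a \<in> T \<Longrightarrow> (a, b) \<in> D \<Longrightarrow> (a, c) \<in> D \<Longrightarrow> \<exists>d. (b, d) \<in> D \<and> (c, d) \<in> D"
    and closed: "\<And>a b. a \<in> T \<Longrightarrow> (a, b) \<in> D \<Longrightarrow> b \<in> T"
    and "a \<in> T" "(a, b) \<in> D\<^sup>*" "(a, c) \<in> D\<^sup>*"
  shows "\<exists>d. (b, d) \<in> D\<^sup>* \<and> (c, d) \<in> D\<^sup>*"
proof -
  have closed_rtrancl: "(a, b) \<in> D\<^sup>* \<Longrightarrow> a \<in> T \<Longrightarrow> b \<in> T" for a b
    by (induction rule: rtrancl_induct) (auto intro: closed)
  have strip: "\<exists>d. (b, d) \<in> D\<^sup>* \<and> (c, d) \<in> D"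
    if "(a, c) \<in> D\<^sup>*" "a \<in> T" "(a, b) \<in> D" for a b c
    using that
  proof (induction arbitrary: b rule: rtrancl_induct)
    case (step y z)
    then obtain d where d: "(b, d) \<in> D\<^sup>*" "(y, d) \<in> D" by blast
    have "y \<in> T" using closed_rtrancl step by blast
    from diamond[OF this d(2) step(2)] obtain e where "(d, e) \<in> D" "(z, e) \<in> D" by blast
    with d show ?case by (meson rtrancl.simps)
  qed blast
  from assms(4,3,5) show ?thesis
  proof (induction arbitrary: c rule: rtrancl_induct)
    case (step y z)
    then obtain d where d: "(y, d) \<in> D\<^sup>*" "(c, d) \<in> D\<^sup>*" by blast
    have "y \<in> T" using closed_rtrancl step by blast
    from strip[OF d(1) this step(2)] obtain e where "(z, e) \<in> D\<^sup>*" "(d, e) \<in> D" by blast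
    with d show ?case by (meson rtrancl.simps)
  qed blast
qed


section \<open>Most general unifiers\<close>

definition eqs_vars :: "(('f, 'v) term \<times> ('f, 'v) term) list \<Rightarrow> 'v set" where
  "eqs_vars es = (\<Union>(s, t)\<in>set es. vars_term s \<union> vars_term t)"

definition eqs_size :: "(('f, 'v) term \<times> ('f, 'v) term) list \<Rightarrow> nat" where
  "eqs_size es = sum_list (map (\<lambda>(s, t). size s + size t + 1) es)"

lemma finite_eqs_vars [simp]: "finite (eqs_vars es)"
  by (auto simp: eqs_vars_def)

lemma eqs_vars_Cons: "eqs_vars ((s, t) # es) = vars_term s \<union> vars_term t \<union> eqs_vars es"
  by (auto simp: eqs_vars_def)

lemma eqs_vars_subst_Var:
  assumes "x \<notin> vars_term t"
  shows "eqs_vars (map (\<lambda>(a, b). (subst a (Var(x := t)), subst b (Var(x := t)))) es)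
    \<subseteq> eqs_vars es \<union> vars_term t - {x}"
  using assms by (auto simp: eqs_vars_def vars_term_subst split: if_splits)

lemma is_unifier_Cons:
  "is_unifier \<sigma> (set ((s, t) # es)) \<longleftrightarrow> subst s \<sigma> = subst t \<sigma> \<and> is_unifier \<sigma> (set es)"
  by (auto simp: is_unifier_def)

lemma is_unifier_insert [simp]:
  "is_unifier \<sigma> (insert (s, t) E) \<longleftrightarrow> subst s \<sigma> = subst t \<sigma> \<and> is_unifier \<sigma> E"
  by (auto simp: is_unifier_def)

lemma mgu_Var_elim:
  assumes x: "x \<notin> vars_term t"
    and mgu_es': "\<And>\<theta>. is_unifier \<theta> (set es') \<Longrightarrow> \<exists>\<mu>. is_mgu \<mu> (set es')"
    and es': "es' = map (\<lambda>(a, b). (subst a (Var(x := t)), subst b (Var(x := t)))) es"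
    and unif: "is_unifier \<theta> (set ((Var x, t) # es))"
  shows "\<exists>\<mu>. is_mgu \<mu> (set ((Var x, t) # es))"
proof -
  let ?s = "Var(x := t)"
  have absorb: "is_unifier \<tau> (set ((Var x, t) # es)) \<Longrightarrow> (\<lambda>y. subst (?s y) \<tau>) = \<tau>" for \<tau>
    by (auto simp: is_unifier_def)
  have transfer: "is_unifier \<tau> (set es') \<longleftrightarrow> is_unifier (\<lambda>y. subst (?s y) \<tau>) (set es)" for \<tau>
    by (auto simp: is_unifier_def es' subst_subst)
  have unif_es': "is_unifier \<tau> (set es')" if "is_unifier \<tau> (set ((Var x, t) # es))" for \<tau>
    using that transfer[of \<tau>] absorb[OF that] by (simp add: is_unifier_Cons)
  obtain \<mu>' where mgu: "is_mgu \<mu>' (set es')" using mgu_es' unif_es'[OF unif] by blast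
  define \<mu> where "\<mu> = (\<lambda>y. subst (?s y) \<mu>')"
  have "subst t \<mu> = subst t \<mu>'"
    by (rule subst_cong) (use x in \<open>auto simp: \<mu>_def\<close>)
  then have "is_unifier \<mu> (set ((Var x, t) # es))"
    using mgu transfer[of \<mu>'] by (auto simp: is_mgu_def is_unifier_Cons \<mu>_def)
  moreover have "\<exists>\<delta>. \<forall>y. \<tau> y = subst (\<mu> y) \<delta>" if unif_\<tau>: "is_unifier \<tau> (set ((Var x, t) # es))" for \<tau>
  proof -
    obtain \<delta> where \<delta>: "\<forall>y. \<tau> y = subst (\<mu>' y) \<delta>"
      using mgu unif_es'[OF unif_\<tau>] by (auto simp: is_mgu_def)
    have "\<tau> x = subst t (\<lambda>y. subst (\<mu>' y) \<delta>)"
      using unif_\<tau> \<delta> by (simp add: is_unifier_Cons) metis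
    then have "\<tau> y = subst (\<mu> y) \<delta>" for y
      using \<delta> by (cases "y = x") (simp_all add: \<mu>_def subst_subst)
    then show ?thesis by blast
  qed
  ultimately show ?thesis by (auto simp: is_mgu_def)
qed

lemma is_unifier_Fun_decomp:
  assumes "length ss = length ts"
  shows "is_unifier \<tau> (set ((Fun f ss, Fun f ts) # es)) \<longleftrightarrow> is_unifier \<tau> (set (zip ss ts @ es))"
proof -
  have "(\<forall>(a, b)\<in>set (zip ss ts). subst a \<tau> = subst b \<tau>) \<longleftrightarrow>
      map (\<lambda>t. subst t \<tau>) ss = map (\<lambda>t. subst t \<tau>) ts"
    using assms by (auto simp: list_eq_iff_nth_eq set_zip)
  then show ?thesis by (auto simp: is_unifier_def)
qed

lemma is_mgu_Fun_decomp:
  assumes "length ss = length ts"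
  shows "is_mgu \<mu> (set ((Fun f ss, Fun f ts) # es)) \<longleftrightarrow> is_mgu \<mu> (set (zip ss ts @ es))"
  unfolding is_mgu_def is_unifier_Fun_decomp[OF assms] ..

lemma is_unifier_Cons_swap: "is_unifier \<sigma> (set ((s, t) # es)) \<longleftrightarrow> is_unifier \<sigma> (set ((t, s) # es))"
  by (auto simp: is_unifier_Cons)

lemma is_mgu_Cons_swap: "is_mgu \<mu> (set ((s, t) # es)) \<longleftrightarrow> is_mgu \<mu> (set ((t, s) # es))"
  unfolding is_mgu_def by (metis is_unifier_Cons_swap)

lemma is_mgu_Cons_trivial: "is_mgu \<mu> (set ((t, t) # es)) \<longleftrightarrow> is_mgu \<mu> (set es)"
  by (simp add: is_mgu_def is_unifier_Cons)

lemma eqs_measure_Fun_decomp: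
  assumes "length ss = length ts"
  shows "eqs_vars (zip ss ts @ es) = eqs_vars ((Fun f ss, Fun f ts) # es)"
    and "eqs_size (zip ss ts @ es) < eqs_size ((Fun f ss, Fun f ts) # es)"
proof -
  have "(\<Union>(a, b)\<in>set (zip ss ts). vars_term a \<union> vars_term b) =
      (\<Union>a\<in>set ss. vars_term a) \<union> (\<Union>b\<in>set ts. vars_term b)"
    using assms by (induction ss ts rule: list_induct2) auto
  then show "eqs_vars (zip ss ts @ es) = eqs_vars ((Fun f ss, Fun f ts) # es)"
    by (auto simp: eqs_vars_def)
  have "eqs_size (zip ss ts) \<le> size_list size ss + size_list size ts"
    using assms by (induction ss ts rule: list_induct2) (simp_all add: eqs_size_def)
  then show "eqs_size (zip ss ts @ es) < eqs_size ((Fun f ss, Fun f ts) # es)"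
    by (simp add: eqs_size_def)
qed

lemma mgu_exists_list: "is_unifier \<theta> (set es) \<Longrightarrow> \<exists>\<mu>. is_mgu \<mu> (set es)"
proof (induction es arbitrary: \<theta> rule: wf_induct[OF wf_measures[of "[\<lambda>es. card (eqs_vars es), eqs_size]"]])
  case (1 es)
  let ?less = "measures [\<lambda>es. card (eqs_vars es), eqs_size]"
  have IH: "\<exists>\<mu>. is_mgu \<mu> (set es')" if "(es', es) \<in> ?less" "is_unifier \<theta>' (set es')" for es' \<theta>'
    using 1(1) that by blast
  have Var_case: "\<exists>\<mu>. is_mgu \<mu> (set ((Var x, t) # es0))"
    if es: "eqs_vars ((Var x, t) # es0) = eqs_vars es"
      and unif: "is_unifier \<theta> (set ((Var x, t) # es0))" and neq: "Var x \<noteq> t" for x t es0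
  proof -
    have x: "x \<notin> vars_term t"
      using subst_neq_Var_if_occurs[of x t \<theta>] unif neq by (auto simp: is_unifier_Cons)
    define es' where "es' = map (\<lambda>(a, b). (subst a (Var(x := t)), subst b (Var(x := t)))) es0"
    have "eqs_vars es' \<subseteq> eqs_vars es - {x}"
      using eqs_vars_subst_Var[OF x, of es0] es by (auto simp: es'_def eqs_vars_Cons)
    moreover have "x \<in> eqs_vars es" using es by (auto simp: eqs_vars_Cons)
    ultimately have "card (eqs_vars es') < card (eqs_vars es)"
      by (metis card_Diff1_less card_mono finite_Diff finite_eqs_vars le_less_trans)
    then show ?thesis using mgu_Var_elim[OF x _ es'_def unif] IH by auto
  qed
  show ?case
  proof (cases es)
    case Nil
    then have "is_mgu Var (set es)" by (simp add: is_mgu_def is_unifier_def) blast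
    then show ?thesis by blast
  next
    case (Cons e es0)
    obtain s t where e: "e = (s, t)" by (cases e)
    note unif = "1.prems"[unfolded Cons e]
    have vars: "eqs_vars ((s, t) # es0) = eqs_vars es" "eqs_vars ((t, s) # es0) = eqs_vars es"
      by (auto simp: Cons e eqs_vars_Cons)
    consider "s = t" | x where "s = Var x" "s \<noteq> t" | x where "t = Var x" "s \<noteq> t"
      | f ss g ts where "s = Fun f ss" "t = Fun g ts"
      by (metis term.exhaust)
    then show ?thesis
    proof cases
      case 1
      have "card (eqs_vars es0) \<le> card (eqs_vars es)"
        by (rule card_mono) (auto simp: Cons e eqs_vars_Cons)
      then have "(es0, es) \<in> ?less" by (auto simp: Cons e eqs_size_def)
      then obtain \<mu> where "is_mgu \<mu> (set es0)" using IH unif by (auto simp: 1 is_unifier_Cons)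
      then show ?thesis using is_mgu_Cons_trivial by (metis Cons e 1)
    next
      case (2 x)
      then show ?thesis using Var_case[of x t es0] unif vars by (simp add: Cons e)
    next
      case (3 x)
      then have "\<exists>\<mu>. is_mgu \<mu> (set ((Var x, s) # es0))"
        using Var_case[of x s es0] unif vars by (auto simp: is_unifier_Cons_swap)
      then show ?thesis by (metis Cons e 3(1) is_mgu_Cons_swap)
    next
      case (4 f ss g ts)
      from unif 4 have fg: "f = g" and len: "length ss = length ts"
        by (auto simp: is_unifier_Cons dest: map_eq_imp_length_eq)
      have "(zip ss ts @ es0, es) \<in> ?less"
        using eqs_measure_Fun_decomp[OF len, of es0 f] by (simp add: Cons e 4 fg)
      moreover have "is_unifier \<theta> (set (zip ss ts @ es0))"
        using unif is_unifier_Fun_decomp[OF len, of \<theta> f es0] by (simp add: 4 fg)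
      ultimately show ?thesis using IH is_mgu_Fun_decomp[OF len] by (metis Cons e 4 fg)
    qed
  qed
qed

lemma mgu_exists: "finite E \<Longrightarrow> is_unifier \<theta> E \<Longrightarrow> \<exists>\<mu>. is_mgu \<mu> E"
  by (metis finite_list mgu_exists_list)

section \<open>Parallel rewriting\<close>

lemma poss_Var [simp]: "poss (Var x) = {[]}"
  by (auto simp: poss_def elim: valid_pos.elims)

lemma Nil_in_poss [simp]: "[] \<in> poss t"
  by (simp add: poss_def)

lemma Cons_in_poss_Fun [simp]: "i # q \<in> poss (Fun f ts) \<longleftrightarrow> i < length ts \<and> q \<in> poss (ts ! i)"
  by (simp add: poss_def)

lemma poss_Fun: "poss (Fun f ts) = insert [] {i # q | i q. i < length ts \<and> q \<in> poss (ts ! i)}"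
  by (auto simp: poss_def elim: valid_pos.elims)

lemma finite_poss: "finite (poss t)"
proof (induction t)
  case (Fun f ts)
  have "{i # q | i q. i < length ts \<and> q \<in> poss (ts ! i)} = (\<Union>i<length ts. Cons i ` poss (ts ! i))"
    by auto
  then show ?case using Fun by (simp add: poss_Fun)
qed simp

lemma vars_term_subt_at: "p \<in> poss t \<Longrightarrow> vars_term (subt_at t p) \<subseteq> vars_term t"
proof (induction p arbitrary: t)
  case (Cons i q)
  then obtain f ts where t: "t = Fun f ts" by (cases t) auto
  with Cons have "vars_term (subt_at (ts ! i) q) \<subseteq> vars_term (ts ! i)" "i < length ts" by auto
  then show ?case using nth_mem by (fastforce simp: t)
qed simp

lemma vars_term_iff_poss: "x \<in> vars_term t \<longleftrightarrow> (\<exists>p \<in> poss t. subt_at t p = Var x)"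
proof (induction t)
  case (Fun f ts)
  show ?case
  proof
    assume "x \<in> vars_term (Fun f ts)"
    then obtain i where i: "i < length ts" "x \<in> vars_term (ts ! i)" by (auto simp: in_set_conv_nth)
    with Fun obtain p where "p \<in> poss (ts ! i)" "subt_at (ts ! i) p = Var x" by (meson nth_mem)
    with i show "\<exists>p \<in> poss (Fun f ts). subt_at (Fun f ts) p = Var x" by (intro bexI[of _ "i # p"]) auto
  next
    assume "\<exists>p \<in> poss (Fun f ts). subt_at (Fun f ts) p = Var x"
    then obtain p where p: "p \<in> poss (Fun f ts)" "subt_at (Fun f ts) p = Var x" by blast
    then obtain i q where "p = i # q" by (cases p) auto
    with p Fun show "x \<in> vars_term (Fun f ts)" by (auto simp: in_set_conv_nth) (metis nth_mem)
  qed
qed auto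

lemma Nil_in_fun_poss_Fun [simp]: "[] \<in> fun_poss (Fun f ts)"
  by (simp add: fun_poss_def)

lemma Cons_in_fun_poss_Fun [simp]:
  "i # q \<in> fun_poss (Fun f ts) \<longleftrightarrow> i < length ts \<and> q \<in> fun_poss (ts ! i)"
  by (simp add: fun_poss_def)

lemma fun_poss_subset_poss: "fun_poss t \<subseteq> poss t"
  by (auto simp: fun_poss_def)

lemma finite_fun_poss: "finite (fun_poss t)"
  using finite_subset[OF fun_poss_subset_poss finite_poss] .

lemma poss_subset_poss_subst: "p \<in> poss t \<Longrightarrow> p \<in> poss (subst t \<sigma>)"
proof (induction p arbitrary: t)
  case (Cons i q) then show ?case by (cases t) auto
qed simp

lemma parallel_pos_Cons: "parallel_pos (i # p) (j # q) \<longleftrightarrow> i \<noteq> j \<or> parallel_pos p q"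
  by (auto simp: parallel_pos_def pos_prefix_def)

fun linear_term :: "('f, 'v) term \<Rightarrow> bool" where
  "linear_term (Var x) = True"
| "linear_term (Fun f ts) \<longleftrightarrow> (\<forall>t\<in>set ts. linear_term t) \<and>
     (\<forall>i<length ts. \<forall>j<length ts. i \<noteq> j \<longrightarrow> vars_term (ts ! i) \<inter> vars_term (ts ! j) = {})"

lemma linear_term_if_unique_var_poss:
  "(\<forall>p\<in>poss t. \<forall>q\<in>poss t. \<forall>x. subt_at t p = Var x \<and> subt_at t q = Var x \<longrightarrow> p = q) \<Longrightarrow> linear_term t"
proof (induction t)
  case (Fun f ts)
  note unique = Fun.prems[rule_format]
  have "linear_term t" if t: "t \<in> set ts" for t
  proof -
    from t obtain i where i: "i < length ts" "t = ts ! i" by (auto simp: in_set_conv_nth)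
    have "\<forall>p\<in>poss t. \<forall>q\<in>poss t. \<forall>x. subt_at t p = Var x \<and> subt_at t q = Var x \<longrightarrow> p = q"
    proof (intro ballI allI impI)
      fix p q x
      assume "p \<in> poss t" "q \<in> poss t" "subt_at t p = Var x \<and> subt_at t q = Var x"
      then have "i # p = i # q" using unique[of "i # p" "i # q" x] i by simp
      then show "p = q" by simp
    qed
    with Fun.IH t show ?thesis by blast
  qed
  moreover have "vars_term (ts ! i) \<inter> vars_term (ts ! j) = {}"
    if "i < length ts" "j < length ts" "i \<noteq> j" for i j
  proof (rule ccontr)
    assume "vars_term (ts ! i) \<inter> vars_term (ts ! j) \<noteq> {}"
    then obtain x p q where "p \<in> poss (ts ! i)" "subt_at (ts ! i) p = Var x"
      "q \<in> poss (ts ! j)" "subt_at (ts ! j) q = Var x" by (meson disjoint_iff vars_term_iff_poss)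
    then have "i # p = j # q" using unique[of "i # p" "j # q" x] that by simp
    with that show False by simp
  qed
  ultimately show ?case by auto
qed simp

lemma left_linear_imp_linear_lhs: "left_linear R \<Longrightarrow> (l, r) \<in> R \<Longrightarrow> linear_term l"
proof -
  assume "left_linear R" "(l, r) \<in> R"
  then have "\<forall>p\<in>poss l. \<forall>q\<in>poss l. \<forall>x. subt_at l p = Var x \<and> subt_at l q = Var x \<longrightarrow> p = q"
    unfolding left_linear_def by fast
  then show ?thesis by (rule linear_term_if_unique_var_poss)
qed

lemma linear_Fun_merge_subst:
  assumes "linear_term (Fun f ls)"
  obtains \<sigma> where "\<And>i x. i < length ls \<Longrightarrow> x \<in> vars_term (ls ! i) \<Longrightarrow> \<sigma> x = S i x"
proof
  let ?arg = "\<lambda>x. SOME i. i < length ls \<and> x \<in> vars_term (ls ! i)"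
  fix i x assume "i < length ls" "x \<in> vars_term (ls ! i)"
  moreover have "?arg x = i"
    by (rule some_equality) (use assms calculation in auto)
  ultimately show "S (?arg x) x = S i x" by simp
qed

inductive par_rstepp :: "('f, 'v) trs \<Rightarrow> ('f, 'v) term \<Rightarrow> ('f, 'v) term \<Rightarrow> bool" for R where
  var: "par_rstepp R (Var x) (Var x)"
| args: "list_all2 (par_rstepp R) ss ts \<Longrightarrow> par_rstepp R (Fun f ss) (Fun f ts)"
| root: "(l, r) \<in> R \<Longrightarrow> par_rstepp R (subst l \<sigma>) (subst r \<sigma>)"

lemma par_rstepp_refl [simp]: "par_rstepp R t t"
  by (induction t) (auto intro: par_rstepp.intros simp: list_all2_same)

lemma par_rstepp_subst:
  "(\<And>x. x \<in> vars_term t \<Longrightarrow> par_rstepp R (\<sigma> x) (\<tau> x)) \<Longrightarrow> par_rstepp R (subst t \<sigma>) (subst t \<tau>)"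
proof (induction t)
  case (Fun f ts) then show ?case
    by (auto intro!: par_rstepp.args simp: list_all2_conv_all_nth) (metis nth_mem)
qed simp

lemma rstepp_imp_par_rstepp: "rstepp R s t \<Longrightarrow> par_rstepp R s t"
proof (induction rule: rstepp.induct)
  case (root l r \<sigma>) then show ?case by (rule par_rstepp.root)
next
  case (ctxt i ts t f) then show ?case
    by (auto intro!: par_rstepp.args simp: list_all2_conv_all_nth nth_list_update)
qed

lemma par_rstepp_imp_rsteps: "par_rstepp R s t \<Longrightarrow> (s, t) \<in> (rstep R)\<^sup>*"
proof (induction rule: par_rstepp.induct)
  case (args ss ts f)
  then have "list_all2 (\<lambda>a b. (a, b) \<in> (rstep R)\<^sup>*) ss ts"
    by (auto simp: list_all2_conv_all_nth)
  then show ?case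
    by (rule Fun_args_rtrancl[rotated]) (auto simp: rstep_eq_rstepp intro: rstepp.ctxt)
qed (auto simp: rstep_eq_rstepp intro: rstepp.root)
lemma replace_par_list_length [simp]: "length (replace_par_list k ts P g) = length ts"
  by (induction ts arbitrary: k) auto

lemma replace_par_list_nth: "j < length ts \<Longrightarrow>
  replace_par_list k ts P g ! j = replace_par (ts ! j) {q. (k + j) # q \<in> P} (\<lambda>q. g ((k + j) # q))"
proof (induction ts arbitrary: k j)
  case (Cons t ts) then show ?case by (cases j) auto
qed simp

lemma replace_par_empty [simp]: "replace_par t {} g = t"
proof (induction t arbitrary: g)
  case (Fun f ts) then show ?case by (simp add: replace_par_list_nth list_eq_iff_nth_eq)
qed simp

lemma replace_par_root: "[] \<in> P \<Longrightarrow> replace_par t P g = g []"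
  by (cases t) auto

lemma replace_par_cong: "(\<And>p. p \<in> P \<Longrightarrow> g p = h p) \<Longrightarrow> replace_par t P g = replace_par t P h"
proof (induction t arbitrary: P g h)
  case (Fun f ts)
  show ?case
  proof (cases "[] \<in> P")
    case False
    have "replace_par (ts ! j) {q. j # q \<in> P} (\<lambda>q. g (j # q)) =
        replace_par (ts ! j) {q. j # q \<in> P} (\<lambda>q. h (j # q))" if "j < length ts" for j
      by (rule Fun(1)) (use Fun(2) that in auto)
    then show ?thesis using False by (simp add: replace_par_list_nth list_eq_iff_nth_eq)
  qed (use Fun in simp)
qed simp

lemma subst_replace_par: "P \<subseteq> poss t \<Longrightarrow>
  subst (replace_par t P g) \<delta> = replace_par (subst t \<delta>) P (\<lambda>p. subst (g p) \<delta>)"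
proof (induction t arbitrary: P g)
  case (Var x)
  then have "P = {} \<or> P = {[]}" by auto
  then show ?case by (auto simp: replace_par_root)
next
  case (Fun f ts)
  show ?case
  proof (cases "[] \<in> P")
    case False
    have "subst (replace_par (ts ! j) {q. j # q \<in> P} (\<lambda>q. g (j # q))) \<delta> =
          replace_par (subst (ts ! j) \<delta>) {q. j # q \<in> P} (\<lambda>q. subst (g (j # q)) \<delta>)"
      if j: "j < length ts" for j
      by (rule Fun(1)) (use Fun(2) j in auto)
    then show ?thesis using False by (simp add: replace_par_list_nth list_eq_iff_nth_eq)
  qed simp
qed

text \<open>A parallel step from \<open>subst l \<sigma>\<close> contracts redexes at the pairwise parallel function
  positions \<open>P\<close> of \<open>l\<close>, with contracta \<open>g p\<close>, and otherwise rewrites only inside \<open>\<sigma>\<close>,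
  turning it into \<open>\<sigma>'\<close>; below \<open>P\<close> nothing is rewritten.\<close>

definition par_decomposition :: "('f, 'v) trs \<Rightarrow> ('f, 'v) term \<Rightarrow> ('v \<Rightarrow> ('f, 'v) term) \<Rightarrow>
    ('f, 'v) term \<Rightarrow> pos set \<Rightarrow> (pos \<Rightarrow> ('f, 'v) term) \<Rightarrow> ('v \<Rightarrow> ('f, 'v) term) \<Rightarrow> bool" where
  "par_decomposition R l \<sigma> t P g \<sigma>' \<longleftrightarrow>
    P \<subseteq> fun_poss l \<and> (\<forall>p\<in>P. \<forall>q\<in>P. p \<noteq> q \<longrightarrow> parallel_pos p q) \<and>
    (\<forall>p\<in>P. \<exists>l' r' \<tau>. (l', r') \<in> R \<and> subst l' \<tau> = subst (subt_at l p) \<sigma> \<and> g p = subst r' \<tau>) \<and>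
    t = replace_par (subst l \<sigma>') P g \<and> (\<forall>x\<in>vars_term l. par_rstepp R (\<sigma> x) (\<sigma>' x)) \<and>
    (\<forall>p\<in>P. \<forall>x\<in>vars_term (subt_at l p). \<sigma>' x = \<sigma> x)"

lemma par_decomposition_Fun:
  assumes lin: "linear_term (Fun f ls)" and len: "length ts = length ls"
    and D: "\<And>i. i < length ls \<Longrightarrow> par_decomposition R (ls ! i) \<sigma> (ts ! i) (Pf i) (gf i) (\<sigma>f i)"
  shows "\<exists>P g \<sigma>'. par_decomposition R (Fun f ls) \<sigma> (Fun f ts) P g \<sigma>'"
proof -
  obtain \<sigma>' where \<sigma>': "\<And>i x. i < length ls \<Longrightarrow> x \<in> vars_term (ls ! i) \<Longrightarrow> \<sigma>' x = \<sigma>f i x"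
    using linear_Fun_merge_subst[OF lin] by blast
  define P where "P = {i # q | i q. i < length ls \<and> q \<in> Pf i}"
  define g where "g p = gf (hd p) (tl p)" for p
  have P_Cons: "{q. j # q \<in> P} = Pf j" if "j < length ls" for j using that by (auto simp: P_def)
  have "ts ! j = replace_par (subst (ls ! j) \<sigma>') {q. j # q \<in> P} (\<lambda>q. g (j # q))"
    if j: "j < length ls" for j
  proof -
    have "subst (ls ! j) \<sigma>' = subst (ls ! j) (\<sigma>f j)" by (rule subst_cong) (use \<sigma>' j in auto)
    moreover have "(\<lambda>q. g (j # q)) = gf j" by (simp add: g_def)
    ultimately show ?thesis using D[OF j] P_Cons[OF j] by (simp add: par_decomposition_def)
  qed
  moreover have "[] \<notin> P" by (simp add: P_def)
  ultimately have t: "Fun f ts = replace_par (subst (Fun f ls) \<sigma>') P g"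
    using len by (auto simp: replace_par_list_nth intro!: nth_equalityI)
  have "par_decomposition R (Fun f ls) \<sigma> (Fun f ts) P g \<sigma>'"
    unfolding par_decomposition_def
  proof (intro conjI t ballI impI)
    show "P \<subseteq> fun_poss (Fun f ls)"
    proof
      fix p assume "p \<in> P"
      then obtain i q where "p = i # q" "i < length ls" "q \<in> Pf i" by (auto simp: P_def)
      then show "p \<in> fun_poss (Fun f ls)" using D by (force simp: par_decomposition_def)
    qed
    show "parallel_pos p q" if "p \<in> P" "q \<in> P" "p \<noteq> q" for p q
      using that D by (force simp: P_def par_decomposition_def parallel_pos_Cons)
    show "\<exists>l' r' \<tau>. (l', r') \<in> R \<and> subst l' \<tau> = subst (subt_at (Fun f ls) p) \<sigma> \<and> g p = subst r' \<tau>"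
      if "p \<in> P" for p
      using that D by (auto simp: P_def par_decomposition_def g_def)
    show "par_rstepp R (\<sigma> x) (\<sigma>' x)" if "x \<in> vars_term (Fun f ls)" for x
      using that D \<sigma>' by (fastforce simp: in_set_conv_nth par_decomposition_def)
    show "\<sigma>' x = \<sigma> x" if "p \<in> P" "x \<in> vars_term (subt_at (Fun f ls) p)" for p x
    proof -
      obtain i q where iq: "p = i # q" "i < length ls" "q \<in> Pf i" using \<open>p \<in> P\<close> by (auto simp: P_def)
      then have "q \<in> poss (ls ! i)"
        using D[OF iq(2)] fun_poss_subset_poss by (auto simp: par_decomposition_def)
      then have "x \<in> vars_term (ls ! i)" using vars_term_subt_at that(2) iq(1) by auto
      then show ?thesis using D[OF iq(2)] iq that(2) \<sigma>'[OF iq(2)] by (auto simp: par_decomposition_def)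
    qed
  qed
  then show ?thesis by blast
qed

lemma par_rstepp_subst_decomposition:
  "par_rstepp R (subst l \<sigma>) t \<Longrightarrow> linear_term l \<Longrightarrow> \<exists>P g \<sigma>'. par_decomposition R l \<sigma> t P g \<sigma>'"
proof (induction l arbitrary: t)
  case (Var x)
  show ?case
    by (rule exI[of _ "{}"], rule exI[of _ "\<lambda>_. t"], rule exI[of _ "\<sigma>(x := t)"])
      (use Var in \<open>auto simp: par_decomposition_def\<close>)
next
  case (Fun f ls)
  from Fun.prems(1) show ?case
  proof (cases rule: par_rstepp.cases)
    case (args ss ts f')
    then have t: "t = Fun f ts" and args: "list_all2 (par_rstepp R) (map (\<lambda>t. subst t \<sigma>) ls) ts"
      by auto
    then have len: "length ts = length ls" by (auto dest: list_all2_lengthD)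
    have "\<exists>P g \<sigma>'. par_decomposition R (ls ! i) \<sigma> (ts ! i) P g \<sigma>'" if "i < length ls" for i
      using Fun.IH[of "ls ! i" "ts ! i"] args Fun.prems(2) that
      by (auto simp: list_all2_conv_all_nth)
    then obtain Pf gf \<sigma>f
      where "\<And>i. i < length ls \<Longrightarrow> par_decomposition R (ls ! i) \<sigma> (ts ! i) (Pf i) (gf i) (\<sigma>f i)"
      by metis
    from par_decomposition_Fun[OF Fun.prems(2) len this] show ?thesis unfolding t .
  next
    case (root l' r' \<tau>)
    show ?thesis
      by (rule exI[of _ "{[]}"], rule exI[of _ "\<lambda>_. t"], rule exI[of _ \<sigma>])
        (use root in \<open>auto simp: replace_par_root par_decomposition_def\<close>)
  qed simp
qed

section \<open>Parallel critical pairs and confluence of the full system\<close>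

lemma exists_renaming_apart:
  assumes "infinite (UNIV :: 'v set)" and "finite (V :: 'v set)" and "finite (A :: 'v set)"
  shows "\<exists>\<pi>. bij \<pi> \<and> \<pi> ` V \<inter> A = {}"
proof -
  have "infinite (UNIV - (V \<union> A))" using assms by auto
  then obtain W where W: "finite W" "card W = card V" "W \<subseteq> UNIV - (V \<union> A)"
    using infinite_arbitrarily_large by blast
  then obtain h where h: "bij_betw h V W" using finite_same_card_bij assms(2) by metis
  define \<pi> where "\<pi> x = (if x \<in> V then h x else if x \<in> W then inv_into V h x else x)" for x
  have "\<pi> (\<pi> x) = x" for x
  proof -
    consider "x \<in> V" | "x \<in> W" | "x \<notin> V" "x \<notin> W" by blast
    then show ?thesis
    proof cases
      case 1
      then have "h x \<in> W" "h x \<notin> V" using h W(3) by (auto simp: bij_betw_def)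
      then show ?thesis using 1 h by (simp add: \<pi>_def bij_betw_inv_into_left)
    next
      case 2
      then have "x \<notin> V" using W(3) by auto
      moreover have "inv_into V h x \<in> V" using 2 h by (meson bij_betw_apply bij_betw_inv_into)
      ultimately show ?thesis using 2 h by (simp add: \<pi>_def bij_betw_inv_into_right)
    qed (simp add: \<pi>_def)
  qed
  then have "bij \<pi>" by (metis o_bij comp_apply id_apply ext)
  moreover have "\<pi> ` V = W" using h by (auto simp: \<pi>_def bij_betw_def)
  ultimately show ?thesis using W(3) by blast
qed

lemma exists_renamings_apart:
  assumes inf: "infinite (UNIV :: 'v set)" and "finite P" and "finite (A :: 'v set)"
    and "\<And>p. p \<in> P \<Longrightarrow> finite (V p :: 'v set)"
  shows "\<exists>\<pi>. \<forall>p\<in>P. bij (\<pi> p) \<and> \<pi> p ` V p \<inter> A = {} \<and>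
    (\<forall>q\<in>P. p \<noteq> q \<longrightarrow> \<pi> p ` V p \<inter> \<pi> q ` V q = {})"
  using assms(2,4)
proof (induction P rule: finite_induct)
  case (insert p P)
  then obtain \<pi> where \<pi>: "\<forall>p\<in>P. bij (\<pi> p) \<and> \<pi> p ` V p \<inter> A = {} \<and>
      (\<forall>q\<in>P. p \<noteq> q \<longrightarrow> \<pi> p ` V p \<inter> \<pi> q ` V q = {})"
    by blast
  have "finite (A \<union> (\<Union>q\<in>P. \<pi> q ` V q))" using insert assms(3) by auto
  with exists_renaming_apart[OF inf _ this, of "V p"] insert.prems obtain \<pi>p
    where \<pi>p: "bij \<pi>p" "\<pi>p ` V p \<inter> (A \<union> (\<Union>q\<in>P. \<pi> q ` V q)) = {}" by auto
  define \<pi>' where "\<pi>' = \<pi>(p := \<pi>p)"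
  have "bij (\<pi>' q) \<and> \<pi>' q ` V q \<inter> A = {}" if "q \<in> insert p P" for q
    using that \<pi> \<pi>p by (cases "q = p") (auto simp: \<pi>'_def)
  moreover have "\<pi>' q1 ` V q1 \<inter> \<pi>' q2 ` V q2 = {}"
    if q: "q1 \<in> insert p P" "q2 \<in> insert p P" "q1 \<noteq> q2" for q1 q2
  proof -
    consider "q1 = p" "q2 \<in> P" | "q2 = p" "q1 \<in> P" | "q1 \<in> P" "q2 \<in> P" "q1 \<noteq> p" "q2 \<noteq> p"
      using q by blast
    then show ?thesis
    proof cases
      case 1 then show ?thesis using \<pi>p(2) insert(2) by (auto simp: \<pi>'_def)
    next
      case 2 then show ?thesis using \<pi>p(2) insert(2) by (auto simp: \<pi>'_def)
    qed (use \<pi> q in \<open>simp add: \<pi>'_def\<close>)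
  qed
  ultimately show ?case by blast
qed simp

lemma rules_renamed_apart:
  fixes \<rho>0 :: "'a \<Rightarrow> ('f, 'v) rule"
  assumes inf: "infinite (UNIV :: 'v set)" and "finite P" and "finite A"
  obtains \<rho> \<theta> where "\<And>p. p \<in> P \<Longrightarrow> variant (\<rho> p) (\<rho>0 p)"
    and "\<And>p. p \<in> P \<Longrightarrow> rule_vars (\<rho> p) \<inter> A = {}"
    and "\<And>p q. p \<in> P \<Longrightarrow> q \<in> P \<Longrightarrow> p \<noteq> q \<Longrightarrow> rule_vars (\<rho> p) \<inter> rule_vars (\<rho> q) = {}"
    and "\<And>x. x \<in> A \<Longrightarrow> \<theta> x = \<sigma> x"
    and "\<And>p. p \<in> P \<Longrightarrow> subst (fst (\<rho> p)) \<theta> = subst (fst (\<rho>0 p)) (\<tau> p)"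
    and "\<And>p. p \<in> P \<Longrightarrow> subst (snd (\<rho> p)) \<theta> = subst (snd (\<rho>0 p)) (\<tau> p)"
proof -
  define V where "V p = rule_vars (\<rho>0 p)" for p
  obtain \<pi> where \<pi>: "\<And>p. p \<in> P \<Longrightarrow> bij (\<pi> p)" "\<And>p. p \<in> P \<Longrightarrow> \<pi> p ` V p \<inter> A = {}"
    "\<And>p q. p \<in> P \<Longrightarrow> q \<in> P \<Longrightarrow> p \<noteq> q \<Longrightarrow> \<pi> p ` V p \<inter> \<pi> q ` V q = {}"
    using exists_renamings_apart[OF inf assms(2,3), of V] by (metis V_def rule_vars_def finite_Un finite_vars_term)
  define \<rho> where "\<rho> p = (subst (fst (\<rho>0 p)) (Var \<circ> \<pi> p), subst (snd (\<rho>0 p)) (Var \<circ> \<pi> p))" for p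
  have vars_\<rho>: "rule_vars (\<rho> p) = \<pi> p ` V p" for p
    by (auto simp: \<rho>_def V_def rule_vars_def vars_term_subst)
  define \<theta> where "\<theta> x = (if \<exists>p\<in>P. x \<in> \<pi> p ` V p then
      (let p = SOME p. p \<in> P \<and> x \<in> \<pi> p ` V p in \<tau> p (inv (\<pi> p) x)) else \<sigma> x)" for x
  have \<theta>_renamed: "\<theta> (\<pi> p y) = \<tau> p y" if p: "p \<in> P" and y: "y \<in> V p" for p y
  proof -
    have "(SOME p'. p' \<in> P \<and> \<pi> p y \<in> \<pi> p' ` V p') = p"
      by (rule some_equality) (use \<pi>(3) p y in blast)+
    moreover have "inv (\<pi> p) (\<pi> p y) = y" using \<pi>(1)[OF p] by (simp add: bij_is_inj)
    ultimately show ?thesis using p y by (auto simp: \<theta>_def Let_def)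
  qed
  have renamed: "subst (subst t (Var \<circ> \<pi> p)) \<theta> = subst t (\<tau> p)"
    if "p \<in> P" "vars_term t \<subseteq> V p" for p t
    using that \<theta>_renamed by (auto simp: subst_subst intro!: subst_cong)
  show ?thesis
  proof (rule that)
    show "variant (\<rho> p) (\<rho>0 p)" if "p \<in> P" for p
      using \<pi>(1)[OF that] by (auto simp: \<rho>_def variant_def)
    show "rule_vars (\<rho> p) \<inter> A = {}" if "p \<in> P" for p
      using \<pi>(2)[OF that] vars_\<rho> by simp
    show "rule_vars (\<rho> p) \<inter> rule_vars (\<rho> q) = {}" if "p \<in> P" "q \<in> P" "p \<noteq> q" for p q
      using \<pi>(3)[OF that] vars_\<rho> by simp
    show "\<theta> x = \<sigma> x" if "x \<in> A" for x
      using \<pi>(2) that by (auto simp: \<theta>_def)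
    show "subst (fst (\<rho> p)) \<theta> = subst (fst (\<rho>0 p)) (\<tau> p)"
      and "subst (snd (\<rho> p)) \<theta> = subst (snd (\<rho>0 p)) (\<tau> p)" if "p \<in> P" for p
      using renamed[OF that] by (simp_all add: \<rho>_def V_def rule_vars_def)
  qed
qed

lemma variant_refl: "variant lr lr"
  unfolding variant_def by (rule exI[of _ id]) auto

lemma pcpsI:
  assumes "\<exists>lr0 \<in> R. variant (l, r) lr0" "\<forall>p\<in>P. \<exists>lr0 \<in> R. variant (\<rho> p) lr0"
    "\<forall>p\<in>P. rule_vars (\<rho> p) \<inter> rule_vars (l, r) = {}"
    "\<forall>p\<in>P. \<forall>q\<in>P. p \<noteq> q \<longrightarrow> rule_vars (\<rho> p) \<inter> rule_vars (\<rho> q) = {}"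
    "P \<noteq> {}" "P \<subseteq> fun_poss l" "\<forall>p\<in>P. \<forall>q\<in>P. p \<noteq> q \<longrightarrow> parallel_pos p q"
    "is_mgu \<sigma> {(fst (\<rho> p), subt_at l p) | p. p \<in> P}" "P = {[]} \<longrightarrow> \<not> variant (\<rho> []) (l, r)"
  shows "(replace_par (subst l \<sigma>) P (\<lambda>p. subst (snd (\<rho> p)) \<sigma>), subst r \<sigma>) \<in> pcps R"
  unfolding pcps_def using assms
  by (intro CollectI exI[of _ l] exI[of _ r] exI[of _ P] exI[of _ \<rho>] exI[of _ \<sigma>] conjI refl) simp_all

lemma variant_root_overlap_trivial:
  assumes "vars_term r \<subseteq> vars_term l" and "variant \<rho> (l, r)" and "subst (fst \<rho>) \<theta> = subst l \<theta>"
  shows "subst (snd \<rho>) \<theta> = subst r \<theta>"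
proof -
  obtain \<pi> where \<pi>: "fst \<rho> = subst l (Var \<circ> \<pi>)" "snd \<rho> = subst r (Var \<circ> \<pi>)"
    using assms(2) unfolding variant_def by auto
  then have "\<theta> (\<pi> x) = \<theta> x" if "x \<in> vars_term l" for x
    using assms(3) that subst_eq_imp_eq_on_vars by (fastforce simp: subst_subst)
  then show ?thesis unfolding \<pi>(2) subst_subst using assms(1) by (auto intro!: subst_cong)
qed

lemma renamed_parallel_overlap_conv:
  fixes R C :: "('f, 'v) trs"
  assumes trs: "is_trs R" and pcp: "\<forall>(a, b) \<in> pcps R. (a, b) \<in> conv C"
    and lr: "(l, r) \<in> R" and P: "P \<noteq> {}" "P \<subseteq> fun_poss l" "\<forall>p\<in>P. \<forall>q\<in>P. p \<noteq> q \<longrightarrow> parallel_pos p q"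
    and variant: "\<forall>p\<in>P. \<exists>lr0 \<in> R. variant (\<rho> p) lr0"
    and apart: "\<forall>p\<in>P. rule_vars (\<rho> p) \<inter> rule_vars (l, r) = {}"
      "\<forall>p\<in>P. \<forall>q\<in>P. p \<noteq> q \<longrightarrow> rule_vars (\<rho> p) \<inter> rule_vars (\<rho> q) = {}"
    and unif: "\<forall>p\<in>P. subst (fst (\<rho> p)) \<theta> = subst (subt_at l p) \<theta>"
  shows "(replace_par (subst l \<theta>) P (\<lambda>p. subst (snd (\<rho> p)) \<theta>), subst r \<theta>) \<in> conv C"
proof (cases "P = {[]} \<and> variant (\<rho> []) (l, r)")
  case True
  have "vars_term r \<subseteq> vars_term l" using trs lr by (auto simp: is_trs_def)
  moreover have "subst (fst (\<rho> [])) \<theta> = subst l \<theta>" using unif True by auto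
  ultimately have "subst (snd (\<rho> [])) \<theta> = subst r \<theta>"
    using True variant_root_overlap_trivial by blast
  then show ?thesis using True by (simp add: replace_par_root)
next
  case False
  define E where "E = {(fst (\<rho> p), subt_at l p) | p. p \<in> P}"
  have "finite P" using P(2) finite_fun_poss finite_subset by blast
  then have "finite E" by (simp add: E_def)
  moreover have "is_unifier \<theta> E" using unif by (auto simp: is_unifier_def E_def)
  ultimately obtain \<mu> where mgu: "is_mgu \<mu> E" using mgu_exists by blast
  then obtain \<delta> where \<theta>_\<mu>: "\<And>x. \<theta> x = subst (\<mu> x) \<delta>"
    using \<open>is_unifier \<theta> E\<close> unfolding is_mgu_def by blast
  have \<mu>\<delta>: "subst (subst s \<mu>) \<delta> = subst s \<theta>" for s
    by (simp add: subst_subst \<theta>_\<mu>[symmetric])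
  let ?L = "replace_par (subst l \<mu>) P (\<lambda>p. subst (snd (\<rho> p)) \<mu>)"
  have "(?L, subst r \<mu>) \<in> pcps R"
    by (rule pcpsI[OF _ variant apart P]) (use lr variant_refl mgu False in \<open>auto simp: E_def\<close>)
  then have "(subst ?L \<delta>, subst (subst r \<mu>) \<delta>) \<in> conv C" using pcp conv_subst by blast
  moreover have "P \<subseteq> poss (subst l \<mu>)" using P(2) fun_poss_subset_poss poss_subset_poss_subst by blast
  ultimately show ?thesis by (simp add: subst_replace_par \<mu>\<delta>)
qed

lemma parallel_overlap_conv:
  fixes R C :: "('f, 'v) trs"
  assumes inf: "infinite (UNIV :: 'v set)" and trs: "is_trs R"
    and pcp: "\<forall>(a, b) \<in> pcps R. (a, b) \<in> conv C"
    and lr: "(l, r) \<in> R" and P: "P \<noteq> {}" "P \<subseteq> fun_poss l" "\<forall>p\<in>P. \<forall>q\<in>P. p \<noteq> q \<longrightarrow> parallel_pos p q"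
    and rules: "\<And>p. p \<in> P \<Longrightarrow> \<rho>0 p \<in> R"
    and match: "\<And>p. p \<in> P \<Longrightarrow> subst (fst (\<rho>0 p)) (\<tau> p) = subst (subt_at l p) \<sigma>"
  shows "(replace_par (subst l \<sigma>) P (\<lambda>p. subst (snd (\<rho>0 p)) (\<tau> p)), subst r \<sigma>) \<in> conv C"
proof -
  have "finite P" using P(2) finite_fun_poss finite_subset by blast
  obtain \<rho> \<theta> where variant: "\<And>p. p \<in> P \<Longrightarrow> variant (\<rho> p) (\<rho>0 p)"
    and apart: "\<And>p. p \<in> P \<Longrightarrow> rule_vars (\<rho> p) \<inter> rule_vars (l, r) = {}"
      "\<And>p q. p \<in> P \<Longrightarrow> q \<in> P \<Longrightarrow> p \<noteq> q \<Longrightarrow> rule_vars (\<rho> p) \<inter> rule_vars (\<rho> q) = {}"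
    and \<theta>: "\<And>x. x \<in> rule_vars (l, r) \<Longrightarrow> \<theta> x = \<sigma> x"
    and \<theta>_lhs: "\<And>p. p \<in> P \<Longrightarrow> subst (fst (\<rho> p)) \<theta> = subst (fst (\<rho>0 p)) (\<tau> p)"
    and \<theta>_rhs: "\<And>p. p \<in> P \<Longrightarrow> subst (snd (\<rho> p)) \<theta> = subst (snd (\<rho>0 p)) (\<tau> p)"
    using rules_renamed_apart[OF inf \<open>finite P\<close>, of "rule_vars (l, r)" \<rho>0 \<sigma> \<tau>]
    by (auto simp: rule_vars_def)
  have l\<theta>: "subst l \<theta> = subst l \<sigma>" and r\<theta>: "subst r \<theta> = subst r \<sigma>"
    using \<theta> by (auto simp: rule_vars_def intro!: subst_cong)
  have "subst (subt_at l p) \<theta> = subst (subt_at l p) \<sigma>" if "p \<in> P" for p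
  proof (rule subst_cong)
    have "vars_term (subt_at l p) \<subseteq> vars_term l"
      using vars_term_subt_at P(2) fun_poss_subset_poss that by blast
    then show "\<theta> x = \<sigma> x" if "x \<in> vars_term (subt_at l p)" for x
      using \<theta> that by (auto simp: rule_vars_def)
  qed
  then have "(replace_par (subst l \<theta>) P (\<lambda>p. subst (snd (\<rho> p)) \<theta>), subst r \<theta>) \<in> conv C"
    using variant rules apart \<theta>_lhs match
    by (intro renamed_parallel_overlap_conv[OF trs pcp lr P]) auto
  moreover have "replace_par (subst l \<theta>) P (\<lambda>p. subst (snd (\<rho> p)) \<theta>) =
      replace_par (subst l \<sigma>) P (\<lambda>p. subst (snd (\<rho>0 p)) (\<tau> p))"
    unfolding l\<theta> using \<theta>_rhs by (auto intro: replace_par_cong)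
  ultimately show ?thesis using r\<theta> by simp
qed

context
  fixes R C :: "('f, 'v) trs"
  assumes inf: "infinite (UNIV :: 'v set)" and trs: "is_trs R" and ll: "left_linear R"
    and pcp: "\<forall>(a, b) \<in> pcps R. (a, b) \<in> conv C"
begin

lemma par_rstepp_from_lhs_cases:
  assumes lr: "(l, r) \<in> R" and "R' \<subseteq> R" and step: "par_rstepp R' (subst l \<sigma>) t"
  shows "(\<exists>\<sigma>'. t = subst l \<sigma>' \<and> (\<forall>x\<in>vars_term l. par_rstepp R' (\<sigma> x) (\<sigma>' x))) \<or>
    (\<exists>a. par_rstepp R' (subst r \<sigma>) a \<and> (t, a) \<in> conv C)"
proof -
  obtain P g \<sigma>' where D: "par_decomposition R' l \<sigma> t P g \<sigma>'"
    using par_rstepp_subst_decomposition[OF step left_linear_imp_linear_lhs[OF ll lr]] by blast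
  show ?thesis
  proof (cases "P = {}")
    case True then show ?thesis using D by (auto simp: par_decomposition_def)
  next
    case False
    have "\<forall>p\<in>P. \<exists>\<rho>0 \<tau>. \<rho>0 \<in> R' \<and> subst (fst \<rho>0) \<tau> = subst (subt_at l p) \<sigma> \<and> g p = subst (snd \<rho>0) \<tau>"
      using D by (force simp: par_decomposition_def)
    then obtain \<rho>0 \<tau> where \<rho>0: "\<And>p. p \<in> P \<Longrightarrow> \<rho>0 p \<in> R'"
      "\<And>p. p \<in> P \<Longrightarrow> subst (fst (\<rho>0 p)) (\<tau> p) = subst (subt_at l p) \<sigma>"
      "\<And>p. p \<in> P \<Longrightarrow> g p = subst (snd (\<rho>0 p)) (\<tau> p)"
      by metis
    have "subst (fst (\<rho>0 p)) (\<tau> p) = subst (subt_at l p) \<sigma>'" if "p \<in> P" for p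
      using D \<rho>0(2)[OF that] that by (auto simp: par_decomposition_def intro!: subst_cong)
    with \<rho>0(1) assms(2) D False
    have "(replace_par (subst l \<sigma>') P (\<lambda>p. subst (snd (\<rho>0 p)) (\<tau> p)), subst r \<sigma>') \<in> conv C"
      by (intro parallel_overlap_conv[OF inf trs pcp lr]) (auto simp: par_decomposition_def)
    moreover have "t = replace_par (subst l \<sigma>') P (\<lambda>p. subst (snd (\<rho>0 p)) (\<tau> p))"
      using D \<rho>0(3) by (auto simp: par_decomposition_def intro: replace_par_cong)
    moreover have "par_rstepp R' (subst r \<sigma>) (subst r \<sigma>')"
    proof (rule par_rstepp_subst)
      have "vars_term r \<subseteq> vars_term l" using trs lr by (auto simp: is_trs_def)
      then show "par_rstepp R' (\<sigma> x) (\<sigma>' x)" if "x \<in> vars_term r" for x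
        using D that by (auto simp: par_decomposition_def)
    qed
    ultimately show ?thesis by blast
  qed
qed

lemma par_root_peak_conv:
  assumes lr: "(l, r) \<in> R1" and "R1 \<subseteq> R" "R2 \<subseteq> R" and step: "par_rstepp R2 (subst l \<sigma>) u"
  shows "\<exists>a b. par_rstepp R2 (subst r \<sigma>) a \<and> par_rstepp R1 u b \<and> (a, b) \<in> conv C"
proof -
  have "(l, r) \<in> R" using lr assms(2) by auto
  from par_rstepp_from_lhs_cases[OF this assms(3) step] show ?thesis
  proof (elim disjE exE conjE)
    fix \<sigma>' assume u: "u = subst l \<sigma>'" and \<sigma>': "\<forall>x\<in>vars_term l. par_rstepp R2 (\<sigma> x) (\<sigma>' x)"
    have "vars_term r \<subseteq> vars_term l" using trs \<open>(l, r) \<in> R\<close> by (auto simp: is_trs_def)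
    then have "par_rstepp R2 (subst r \<sigma>) (subst r \<sigma>')" using \<sigma>' by (auto intro: par_rstepp_subst)
    moreover have "par_rstepp R1 u (subst r \<sigma>')" unfolding u by (rule par_rstepp.root[OF lr])
    ultimately show ?thesis using conv_refl by blast
  qed (use conv_sym par_rstepp_refl in blast)
qed

lemma par_peak_conv:
  assumes "par_rstepp R1 s t" "par_rstepp R2 s u" "R1 \<subseteq> R" "R2 \<subseteq> R"
  shows "\<exists>a b. par_rstepp R2 t a \<and> par_rstepp R1 u b \<and> (a, b) \<in> conv C"
  using assms(1,2)
proof (induction arbitrary: u rule: par_rstepp.induct)
  case (root l r \<sigma>)
  then show ?case using par_root_peak_conv assms(3,4) by blast
next
  case (var x)
  from var show ?case
  proof (cases rule: par_rstepp.cases)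
    case (root l r \<sigma>)
    then obtain a b where "par_rstepp R1 u a" "par_rstepp R2 (Var x) b" "(a, b) \<in> conv C"
      using par_root_peak_conv[OF root(3) assms(4,3)] by (metis par_rstepp_refl)
    then show ?thesis using conv_sym by blast
  qed (use conv_refl par_rstepp_refl in blast)+
next
  case (args ss ts f)
  note IH = args.IH
  have ss_ts: "list_all2 (par_rstepp R1) ss ts" using IH by (auto simp: list_all2_conv_all_nth)
  from args.prems show ?case
  proof (cases rule: par_rstepp.cases)
    case (root l r \<sigma>)
    moreover have "par_rstepp R1 (Fun f ss) (Fun f ts)" using ss_ts by (rule par_rstepp.args)
    ultimately obtain a b where "par_rstepp R1 u a" "par_rstepp R2 (Fun f ts) b" "(a, b) \<in> conv C"
      using par_root_peak_conv[OF _ assms(4,3)] by metis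
    then show ?thesis using conv_sym by blast
  next
    case (args us)
    then have u: "u = Fun f us" and us: "list_all2 (par_rstepp R2) ss us" by auto
    have "\<exists>a b. par_rstepp R2 (ts ! i) a \<and> par_rstepp R1 (us ! i) b \<and> (a, b) \<in> conv C"
      if "i < length ss" for i
      using that IH us by (auto simp: list_all2_conv_all_nth)
    then obtain a b where ab: "\<And>i. i < length ss \<Longrightarrow>
        par_rstepp R2 (ts ! i) (a i) \<and> par_rstepp R1 (us ! i) (b i) \<and> (a i, b i) \<in> conv C"
      by metis
    let ?as = "map a [0..<length ss]" and ?bs = "map b [0..<length ss]"
    have len: "length ts = length ss" "length us = length ss"
      using ss_ts us by (auto dest: list_all2_lengthD)
    have "par_rstepp R2 (Fun f ts) (Fun f ?as)" "par_rstepp R1 u (Fun f ?bs)"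
      unfolding u using ab len by (auto intro!: par_rstepp.args simp: list_all2_conv_all_nth)
    moreover have "(Fun f ?as, Fun f ?bs) \<in> conv C"
      using ab by (auto intro!: conv_Fun_args simp: list_all2_conv_all_nth)
    ultimately show ?thesis by blast
  qed
qed

lemma rsteps_par_rstepp_commute:
  assumes "C \<subseteq> R" "confluent C"
  shows "(s, x) \<in> (rstep C)\<^sup>* \<Longrightarrow> par_rstepp R s y \<Longrightarrow>
    \<exists>x' w. par_rstepp R x x' \<and> (x', w) \<in> (rstep C)\<^sup>* \<and> (y, w) \<in> (rstep C)\<^sup>*"
proof (induction rule: rtrancl_induct)
  case (step x1 x)
  then obtain x1' w1 where w1: "par_rstepp R x1 x1'" "(x1', w1) \<in> (rstep C)\<^sup>*" "(y, w1) \<in> (rstep C)\<^sup>*"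
    by blast
  have "par_rstepp C x1 x" using step(2) rstepp_imp_par_rstepp by (auto simp: rstep_eq_rstepp)
  from par_peak_conv[OF this w1(1) assms(1) order.refl]
  obtain a b where ab: "par_rstepp R x a" "par_rstepp C x1' b" "(a, b) \<in> conv C" by blast
  have "(b, x1') \<in> conv C" using ab(2) par_rstepp_imp_rsteps rsteps_imp_conv conv_sym by blast
  then have "(a, w1) \<in> conv C" using ab(3) w1(2) rsteps_imp_conv conv_trans by blast
  then obtain w where "(a, w) \<in> (rstep C)\<^sup>*" "(w1, w) \<in> (rstep C)\<^sup>*"
    using confluent_conv_join assms(2) by blast
  then show ?case using ab(1) w1(3) by (meson rtrancl_trans)
qed blast

theorem confluent_if_confluent_subsystem:
  assumes CR: "C \<subseteq> R" and conf: "confluent C"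
  shows "confluent R"
proof (rule confluentI)
  let ?C = "(rstep C)\<^sup>*"
  define D where "D = {(x, y). \<exists>z. par_rstepp R x z \<and> (z, y) \<in> ?C}"
  have diamond: "\<exists>d. (x, d) \<in> D \<and> (y, d) \<in> D" if peak: "(s, x) \<in> D" "(s, y) \<in> D" for s x y
  proof -
    obtain a b where a: "par_rstepp R s a" "(a, x) \<in> ?C" and b: "par_rstepp R s b" "(b, y) \<in> ?C"
      using peak unfolding D_def by blast
    from par_peak_conv[OF a(1) b(1) order.refl order.refl] obtain a' b' v
      where ab': "par_rstepp R a a'" "par_rstepp R b b'" "(a', v) \<in> ?C" "(b', v) \<in> ?C"
      using confluent_conv_join[OF conf] by metis
    obtain x' w where x': "par_rstepp R x x'" "(x', w) \<in> ?C" "(a', w) \<in> ?C"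
      using rsteps_par_rstepp_commute[OF CR conf a(2) ab'(1)] by blast
    obtain y' w' where y': "par_rstepp R y y'" "(y', w') \<in> ?C" "(b', w') \<in> ?C"
      using rsteps_par_rstepp_commute[OF CR conf b(2) ab'(2)] by blast
    obtain k where k: "(w, k) \<in> ?C" "(v, k) \<in> ?C"
      using confluent_join[OF conf] x'(3) ab'(3) by blast
    obtain j where j: "(w', j) \<in> ?C" "(k, j) \<in> ?C"
      using confluent_join[OF conf] y'(3) ab'(4) k(2) by (meson rtrancl_trans)
    have "(x', j) \<in> ?C" "(y', j) \<in> ?C" using x'(2) y'(2) k(1) j by (meson rtrancl_trans)+
    then show ?thesis using x'(1) y'(1) unfolding D_def by blast
  qed
  have "rstep R \<subseteq> D" unfolding D_def by (auto simp: rstep_eq_rstepp intro: rstepp_imp_par_rstepp)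
  moreover have "D \<subseteq> (rstep R)\<^sup>*"
    using par_rstepp_imp_rsteps rtrancl_mono[OF rstep_mono[OF CR]] unfolding D_def
    by (blast intro: rtrancl_trans)
  ultimately have D_rsteps: "D\<^sup>* = (rstep R)\<^sup>*"
    by (rule rtrancl_subset)
  fix t u v assume "(t, u) \<in> (rstep R)\<^sup>*" "(t, v) \<in> (rstep R)\<^sup>*"
  then show "\<exists>w. (u, w) \<in> (rstep R)\<^sup>* \<and> (v, w) \<in> (rstep R)\<^sup>*"
    using diamond_imp_confluent_on[of UNIV D t u v] diamond unfolding D_rsteps by blast
qed

end

section \<open>Confluence of the subsystem\<close>

lemma funs_term_rstepp: "rstepp C s t \<Longrightarrow> is_trs C \<Longrightarrow> funs_term t \<subseteq> funs_term s \<union> funs_trs C"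
proof (induction rule: rstepp.induct)
  case (root l r \<sigma>)
  have "vars_term r \<subseteq> vars_term l" using root by (auto simp: is_trs_def)
  moreover have "funs_term r \<subseteq> funs_trs C" using root by (auto simp: funs_trs_def)
  ultimately show ?case by (auto simp: funs_term_subst)
next
  case (ctxt i ts t f)
  have "funs_term (ts ! i) \<subseteq> funs_term (Fun f ts)" using ctxt(1) by auto
  moreover have "set (ts[i := t]) \<subseteq> insert t (set ts)" by (rule set_update_subset_insert)
  ultimately show ?case using ctxt.IH ctxt.prems by auto
qed

lemma rsteps_preserve_funs_trs:
  "(s, t) \<in> (rstep C)\<^sup>* \<Longrightarrow> is_trs C \<Longrightarrow> funs_term s \<subseteq> funs_trs C \<Longrightarrow> funs_term t \<subseteq> funs_trs C"
  by (induction rule: rtrancl_induct) (auto simp: rstep_eq_rstepp dest!: funs_term_rstepp)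

context
  fixes R C :: "('f, 'v) trs"
  assumes trsC: "is_trs C" and CR: "C \<subseteq> R"
    and restr: "\<forall>(l, r) \<in> restrict_trs R C. (l, r) \<in> (rstep C)\<^sup>*"
begin

lemma rstepp_from_funs_trs:
  "rstepp R s t \<Longrightarrow> funs_term s \<subseteq> funs_trs C \<Longrightarrow> (s, t) \<in> (rstep C)\<^sup>*"
proof (induction rule: rstepp.induct)
  case (root l r \<sigma>)
  then have "(l, r) \<in> restrict_trs R C"
    by (auto simp: restrict_trs_def funs_term_subst)
  then show ?case using restr rsteps_subst by blast
next
  case (ctxt i ts t f)
  have "ts ! i \<in> set ts" using ctxt(1) by simp
  then have "(ts ! i, t) \<in> (rstep C)\<^sup>*" using ctxt.IH ctxt.prems by auto
  from rsteps_arg[OF this ctxt(1) refl] show ?case .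
qed

lemma rsteps_from_funs_trs:
  "(s, t) \<in> (rstep R)\<^sup>* \<Longrightarrow> funs_term s \<subseteq> funs_trs C \<Longrightarrow> (s, t) \<in> (rstep C)\<^sup>*"
proof (induction rule: rtrancl_induct)
  case (step y z)
  then have "funs_term y \<subseteq> funs_trs C" using rsteps_preserve_funs_trs trsC by blast
  moreover have "rstepp R y z" using step(2) by (simp add: rstep_eq_rstepp)
  ultimately have "(y, z) \<in> (rstep C)\<^sup>*" using rstepp_from_funs_trs by blast
  with step show ?case by simp
qed simp

lemma confluent_join_from_funs_trs:
  assumes "confluent R" and s: "funs_term s \<subseteq> funs_trs C"
    and "(s, x) \<in> (rstep C)\<^sup>*" "(s, y) \<in> (rstep C)\<^sup>*"
  shows "\<exists>z. (x, z) \<in> (rstep C)\<^sup>* \<and> (y, z) \<in> (rstep C)\<^sup>*"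
proof -
  have "(s, x) \<in> (rstep R)\<^sup>*" "(s, y) \<in> (rstep R)\<^sup>*"
    using assms(3,4) rtrancl_mono[OF rstep_mono[OF CR]] by auto
  with \<open>confluent R\<close> obtain v where "(x, v) \<in> (rstep R)\<^sup>*" "(y, v) \<in> (rstep R)\<^sup>*"
    using confluent_join by blast
  moreover have "funs_term x \<subseteq> funs_trs C" "funs_term y \<subseteq> funs_trs C"
    using rsteps_preserve_funs_trs[OF _ trsC s] assms(3,4) by auto
  ultimately show ?thesis using rsteps_from_funs_trs by blast
qed

end

text \<open>Relative to a signature \<open>F\<close>, an outer step contracts a redex reachable from the root
  through symbols of \<open>F\<close> only; an inner step rewrites inside an alien subterm, that is, below
  a symbol outside \<open>F\<close>.\<close>

inductive_set outer_rstep :: "('f, 'v) trs \<Rightarrow> 'f set \<Rightarrow> ('f, 'v) term rel" for C F where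
  root: "(l, r) \<in> C \<Longrightarrow> (subst l \<sigma>, subst r \<sigma>) \<in> outer_rstep C F"
| ctxt: "f \<in> F \<Longrightarrow> i < length ts \<Longrightarrow> (ts ! i, t) \<in> outer_rstep C F \<Longrightarrow>
    (Fun f ts, Fun f (ts[i := t])) \<in> outer_rstep C F"

inductive_set inner_rstep :: "('f, 'v) trs \<Rightarrow> 'f set \<Rightarrow> ('f, 'v) term rel" for C F where
  alien: "f \<notin> F \<Longrightarrow> i < length ts \<Longrightarrow> (ts ! i, t) \<in> rstep C \<Longrightarrow>
    (Fun f ts, Fun f (ts[i := t])) \<in> inner_rstep C F"
| ctxt: "i < length ts \<Longrightarrow> (ts ! i, t) \<in> inner_rstep C F \<Longrightarrow>
    (Fun f ts, Fun f (ts[i := t])) \<in> inner_rstep C F"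

lemma rstep_eq_outer_Un_inner: "rstep C = outer_rstep C F \<union> inner_rstep C F"
proof (intro equalityI subrelI)
  fix s t assume "(s, t) \<in> rstep C"
  then have "rstepp C s t" by (simp add: rstep_eq_rstepp)
  then show "(s, t) \<in> outer_rstep C F \<union> inner_rstep C F"
  proof induction
    case (ctxt i ts t f)
    then show ?case
      by (cases "f \<in> F")
        (auto intro: outer_rstep.ctxt inner_rstep.ctxt inner_rstep.alien simp: rstep_eq_rstepp)
  qed (auto intro: outer_rstep.root)
next
  fix s t assume "(s, t) \<in> outer_rstep C F \<union> inner_rstep C F"
  then have "rstepp C s t"
  proof
    assume "(s, t) \<in> outer_rstep C F"
    then show ?thesis by induction (auto intro: rstepp.intros)
  next
    assume "(s, t) \<in> inner_rstep C F"
    then show ?thesis by induction (auto intro: rstepp.intros simp: rstep_eq_rstepp)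
  qed
  then show "(s, t) \<in> rstep C" by (simp add: rstep_eq_rstepp)
qed

lemma outer_rstep_subst: "(s, t) \<in> outer_rstep C F \<Longrightarrow> (subst s \<delta>, subst t \<delta>) \<in> outer_rstep C F"
proof (induction rule: outer_rstep.induct)
  case (root l r \<sigma>)
  from outer_rstep.root[OF root, of "\<lambda>x. subst (\<sigma> x) \<delta>"] show ?case by (simp add: subst_subst)
next
  case (ctxt f i ts t)
  then show ?case using outer_rstep.ctxt[of f F i "map (\<lambda>t. subst t \<delta>) ts" "subst t \<delta>" C]
    by (simp add: map_update)
qed

lemma rstepp_imp_outer_rstep: "rstepp C s t \<Longrightarrow> funs_term s \<subseteq> F \<Longrightarrow> (s, t) \<in> outer_rstep C F"
proof (induction rule: rstepp.induct)
  case (ctxt i ts t f)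
  have "ts ! i \<in> set ts" using ctxt(1) by simp
  then have "funs_term (ts ! i) \<subseteq> F" "f \<in> F" using ctxt.prems by auto
  then show ?case using ctxt by (auto intro: outer_rstep.ctxt)
qed (rule outer_rstep.root)

fun aliens :: "'f set \<Rightarrow> ('f, 'v) term \<Rightarrow> ('f, 'v) term set" where
  "aliens F (Var x) = {}"
| "aliens F (Fun f ts) = (if f \<in> F then \<Union> (set (map (aliens F) ts)) else {Fun f ts})"

fun abstract_aliens :: "'f set \<Rightarrow> (('f, 'v) term \<Rightarrow> 'v) \<Rightarrow> ('f, 'v) term \<Rightarrow> ('f, 'v) term" where
  "abstract_aliens F h (Var x) = Var x"
| "abstract_aliens F h (Fun f ts) =
    (if f \<in> F then Fun f (map (abstract_aliens F h) ts) else Var (h (Fun f ts)))"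

lemma finite_aliens: "finite (aliens F t)"
  by (induction t) auto

lemma aliens_root_notin: "a \<in> aliens F t \<Longrightarrow> \<exists>g ts. a = Fun g ts \<and> g \<notin> F"
  by (induction t) (auto split: if_splits)

lemma funs_abstract_aliens: "funs_term (abstract_aliens F h t) \<subseteq> F"
  by (induction t) auto

lemma subst_abstract_aliens:
  assumes "aliens F u \<subseteq> Al" "vars_term u \<inter> W = {}" "\<And>a. a \<in> Al \<Longrightarrow> h a \<in> W \<and> \<beta> (h a) = a"
    and "\<And>w. w \<notin> W \<Longrightarrow> \<beta> w = Var w"
  shows "subst (abstract_aliens F h u) \<beta> = u"
  using assms(1,2)
proof (induction u)
  case (Fun f ts)
  show ?case
  proof (cases "f \<in> F")
    case True
    have "subst (abstract_aliens F h x) \<beta> = x" if "x \<in> set ts" for x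
      by (intro Fun.IH[OF that]) (use Fun.prems True that in auto)
    then show ?thesis using True by (simp add: map_idI)
  qed (use Fun assms(3) in auto)
qed (use assms(4) in auto)

definition alien_subst :: "'f set \<Rightarrow> ('v \<Rightarrow> ('f, 'v) term) \<Rightarrow> bool" where
  "alien_subst F \<beta> \<longleftrightarrow> (\<forall>w g ts. \<beta> w = Fun g ts \<longrightarrow> g \<notin> F)"

lemma obtain_alien_abstraction:
  assumes "infinite (UNIV :: 'v set)"
  obtains K and \<beta> :: "'v \<Rightarrow> ('f, 'v) term"
  where "t = subst K \<beta>" "funs_term K \<subseteq> F" "alien_subst F \<beta>"
proof -
  define Al where "Al = aliens F t"
  have "infinite (UNIV - vars_term t)" using assms by auto
  then obtain W where W: "finite W" "card W = card Al" "W \<subseteq> UNIV - vars_term t"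
    using infinite_arbitrarily_large by blast
  then obtain h where h: "bij_betw h Al W" using finite_same_card_bij finite_aliens Al_def by metis
  define \<beta> where "\<beta> w = (if w \<in> W then inv_into Al h w else Var w)" for w
  have "subst (abstract_aliens F h t) \<beta> = t"
  proof (rule subst_abstract_aliens)
    show "h a \<in> W \<and> \<beta> (h a) = a" if "a \<in> Al" for a
      using that h by (auto simp: \<beta>_def bij_betw_def)
  qed (use W(3) in \<open>auto simp: Al_def \<beta>_def\<close>)
  moreover have "alien_subst F \<beta>"
    unfolding alien_subst_def
  proof (intro allI impI)
    fix w g ts assume \<beta>w: "\<beta> w = Fun g ts"
    then have "w \<in> W" by (auto simp: \<beta>_def split: if_splits)
    then have "inv_into Al h w \<in> Al" using h by (meson bij_betw_apply bij_betw_inv_into)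
    then show "g \<notin> F" using \<beta>w \<open>w \<in> W\<close> aliens_root_notin by (fastforce simp: \<beta>_def Al_def)
  qed
  ultimately show ?thesis using that funs_abstract_aliens by metis
qed

lemma match_alien_subst:
  assumes "linear_term l" "funs_term l \<subseteq> F" "alien_subst F \<beta>" "subst l \<sigma> = subst K \<beta>"
  shows "\<exists>\<sigma>'. K = subst l \<sigma>' \<and> (\<forall>x\<in>vars_term l. subst (\<sigma>' x) \<beta> = \<sigma> x)"
  using assms
proof (induction l arbitrary: K)
  case (Var x)
  show ?case by (rule exI[of _ "\<lambda>_. K"]) (use Var in auto)
next
  case (Fun f ls)
  show ?case
  proof (cases K)
    case (Var w)
    then show ?thesis using Fun.prems unfolding alien_subst_def by (metis funs_term.simps(2) insert_subset subst.simps)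
  next
    case K: (Fun g ks)
    from Fun.prems(4) K have fg: "f = g" and args: "map (\<lambda>t. subst t \<sigma>) ls = map (\<lambda>t. subst t \<beta>) ks"
      by auto
    then have len: "length ks = length ls" by (metis length_map)
    have "\<exists>\<sigma>i. ks ! i = subst (ls ! i) \<sigma>i \<and> (\<forall>x\<in>vars_term (ls ! i). subst (\<sigma>i x) \<beta> = \<sigma> x)"
      if i: "i < length ls" for i
    proof (rule Fun.IH)
      show "ls ! i \<in> set ls" using i by simp
      show "subst (ls ! i) \<sigma> = subst (ks ! i) \<beta>" using args i len by (metis nth_map)
    qed (use Fun.prems i nth_mem in fastforce)+
    then obtain S where S: "\<And>i. i < length ls \<Longrightarrow>
        ks ! i = subst (ls ! i) (S i) \<and> (\<forall>x\<in>vars_term (ls ! i). subst (S i x) \<beta> = \<sigma> x)"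
      by metis
    obtain \<sigma>' where \<sigma>': "\<And>i x. i < length ls \<Longrightarrow> x \<in> vars_term (ls ! i) \<Longrightarrow> \<sigma>' x = S i x"
      using linear_Fun_merge_subst[OF Fun.prems(1)] by blast
    have "ks ! i = subst (ls ! i) \<sigma>'" if "i < length ls" for i
      using S[OF that] \<sigma>'[OF that] by (auto intro!: subst_cong)
    then have "K = subst (Fun f ls) \<sigma>'" using K fg len by (auto simp: list_eq_iff_nth_eq)
    moreover have "\<forall>x\<in>vars_term (Fun f ls). subst (\<sigma>' x) \<beta> = \<sigma> x"
      using S \<sigma>' by (auto simp: in_set_conv_nth)
    ultimately show ?thesis by blast
  qed
qed

lemma funs_lhs_subset_funs_trs: "(l, r) \<in> C \<Longrightarrow> funs_term l \<subseteq> funs_trs C"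
  by (auto simp: funs_trs_def)

lemma left_linear_subset: "left_linear R \<Longrightarrow> C \<subseteq> R \<Longrightarrow> left_linear C"
  unfolding left_linear_def by blast

lemma is_trs_subset: "is_trs R \<Longrightarrow> C \<subseteq> R \<Longrightarrow> is_trs C"
  unfolding is_trs_def by blast

lemma outer_rstep_project:
  assumes ll: "left_linear C" and trs: "is_trs C"
  shows "(s, t) \<in> outer_rstep C (funs_trs C) \<Longrightarrow> s = subst K \<beta> \<Longrightarrow> funs_term K \<subseteq> funs_trs C \<Longrightarrow>
    alien_subst (funs_trs C) \<beta> \<Longrightarrow> \<exists>K'. rstepp C K K' \<and> t = subst K' \<beta>"
proof (induction arbitrary: K rule: outer_rstep.induct)
  case (root l r \<sigma>)
  have lin: "linear_term l" and vars: "vars_term r \<subseteq> vars_term l"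
    using left_linear_imp_linear_lhs[OF ll root(1)] trs root(1) by (auto simp: is_trs_def)
  from match_alien_subst[OF lin funs_lhs_subset_funs_trs[OF root(1)] root(4)] root(2)
  obtain \<sigma>' where \<sigma>': "K = subst l \<sigma>'" "\<forall>x\<in>vars_term l. subst (\<sigma>' x) \<beta> = \<sigma> x" by auto
  have "subst r \<sigma> = subst (subst r \<sigma>') \<beta>" unfolding subst_subst
    by (rule subst_cong) (use \<sigma>'(2) vars in auto)
  moreover have "rstepp C K (subst r \<sigma>')" unfolding \<sigma>'(1) by (rule rstepp.root[OF root(1)])
  ultimately show ?case by blast
next
  case (ctxt f i ts t)
  show ?case
  proof (cases K)
    case (Var w)
    then show ?thesis using ctxt(1,5,7) unfolding alien_subst_def by (metis subst.simps(1))
  next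
    case (Fun g ks)
    from ctxt(5) Fun have fg: "g = f" and ts: "ts = map (\<lambda>t. subst t \<beta>) ks" by auto
    have i: "i < length ks" using ctxt(2) ts by simp
    then have "ks ! i \<in> set ks" by simp
    then have "funs_term (ks ! i) \<subseteq> funs_trs C" using ctxt(6) Fun by auto
    with ctxt.IH[OF _ _ ctxt(7)] i ts obtain k' where k': "rstepp C (ks ! i) k'" "t = subst k' \<beta>"
      by auto
    have "rstepp C K (Fun f (ks[i := k']))" unfolding Fun fg by (rule rstepp.ctxt[OF i k'(1)])
    moreover have "Fun f (ts[i := t]) = subst (Fun f (ks[i := k'])) \<beta>"
      using ts k'(2) by (simp add: map_update)
    ultimately show ?thesis by blast
  qed
qed

lemma outer_rsteps_project:
  assumes ll: "left_linear C" and trs: "is_trs C" and \<beta>: "alien_subst (funs_trs C) \<beta>"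
  shows "(subst K \<beta>, t) \<in> (outer_rstep C (funs_trs C))\<^sup>* \<Longrightarrow> funs_term K \<subseteq> funs_trs C \<Longrightarrow>
    \<exists>K'. (K, K') \<in> (rstep C)\<^sup>* \<and> t = subst K' \<beta>"
proof (induction rule: rtrancl_induct)
  case (step y z)
  then obtain K' where K': "(K, K') \<in> (rstep C)\<^sup>*" "y = subst K' \<beta>" by blast
  moreover have "funs_term K' \<subseteq> funs_trs C" using rsteps_preserve_funs_trs[OF K'(1) trs step(4)] .
  ultimately obtain K'' where "rstepp C K' K''" "z = subst K'' \<beta>"
    using outer_rstep_project[OF ll trs step(2) _ _ \<beta>] by blast
  then show ?case using K'(1) by (auto simp: rstep_eq_rstepp intro: rtrancl_into_rtrancl)
qed blast

lemma rsteps_lift_outer: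
  assumes trs: "is_trs C"
  shows "(K, J) \<in> (rstep C)\<^sup>* \<Longrightarrow> funs_term K \<subseteq> funs_trs C \<Longrightarrow>
    (subst K \<beta>, subst J \<beta>) \<in> (outer_rstep C (funs_trs C))\<^sup>*"
proof (induction rule: rtrancl_induct)
  case (step y z)
  have "funs_term y \<subseteq> funs_trs C" using rsteps_preserve_funs_trs[OF step(1) trs step(4)] .
  with step(2) have "(y, z) \<in> outer_rstep C (funs_trs C)"
    using rstepp_imp_outer_rstep by (auto simp: rstep_eq_rstepp)
  then have "(subst y \<beta>, subst z \<beta>) \<in> outer_rstep C (funs_trs C)" by (rule outer_rstep_subst)
  with step show ?case by (auto intro: rtrancl_into_rtrancl)
qed simp

fun alien_rank :: "'f set \<Rightarrow> ('f, 'v) term \<Rightarrow> nat" where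
  "alien_rank F (Var x) = 0"
| "alien_rank F (Fun f ts) = (if f \<in> F then 0 else 1) + Max (insert 0 (set (map (alien_rank F) ts)))"

lemma alien_rank_arg:
  assumes "t \<in> set ts"
  shows "alien_rank F t + (if f \<in> F then 0 else 1) \<le> alien_rank F (Fun f ts)"
proof -
  have "alien_rank F t \<le> Max (insert 0 (set (map (alien_rank F) ts)))"
    using assms by (intro Max_ge) auto
  then show ?thesis by simp
qed

lemma alien_rank_Fun_le:
  assumes "\<And>t. t \<in> set ts \<Longrightarrow> alien_rank F t + (if f \<in> F then 0 else 1) \<le> n" "f \<notin> F \<Longrightarrow> 1 \<le> n"
  shows "alien_rank F (Fun f ts) \<le> n"
proof (cases "f \<in> F")
  case True
  then have "Max (insert 0 (set (map (alien_rank F) ts))) \<le> n" using assms(1) by (subst Max_le_iff) auto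
  then show ?thesis using True by simp
next
  case False
  have "\<forall>t\<in>set ts. alien_rank F t \<le> n - 1" using assms(1) False by fastforce
  then have "Max (insert 0 (set (map (alien_rank F) ts))) \<le> n - 1" by (subst Max_le_iff) auto
  then have "1 + Max (insert 0 (set (map (alien_rank F) ts))) \<le> n" using assms(2) False by linarith
  then show ?thesis using False by simp
qed

lemma alien_rank_subst_le:
  "funs_term t \<subseteq> F \<Longrightarrow> (\<And>x. x \<in> vars_term t \<Longrightarrow> alien_rank F (\<sigma> x) \<le> n) \<Longrightarrow>
    alien_rank F (subst t \<sigma>) \<le> n"
proof (induction t)
  case (Fun f ts)
  have "f \<in> F" using Fun.prems by simp
  show ?case unfolding subst.simps
  proof (rule alien_rank_Fun_le)
    fix u assume "u \<in> set (map (\<lambda>t. subst t \<sigma>) ts)"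
    then obtain t where t: "t \<in> set ts" "u = subst t \<sigma>" by auto
    have "funs_term t \<subseteq> F" using Fun.prems(1) t(1) by auto
    then have "alien_rank F u \<le> n" using Fun.IH[OF t(1)] Fun.prems(2) t by auto
    then show "alien_rank F u + (if f \<in> F then 0 else 1) \<le> n" using \<open>f \<in> F\<close> by simp
  qed (use \<open>f \<in> F\<close> in simp)
qed simp

lemma alien_rank_subst_ge_Var: "x \<in> vars_term t \<Longrightarrow> alien_rank F (\<sigma> x) \<le> alien_rank F (subst t \<sigma>)"
proof (induction t)
  case (Fun f ts)
  then obtain t where t: "t \<in> set ts" "x \<in> vars_term t" by auto
  have "alien_rank F (\<sigma> x) \<le> alien_rank F (subst t \<sigma>)" using Fun.IH[OF t] .
  also have "\<dots> \<le> alien_rank F (Fun f (map (\<lambda>t. subst t \<sigma>) ts))"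
  proof -
    have "subst t \<sigma> \<in> set (map (\<lambda>t. subst t \<sigma>) ts)" using t(1) by simp
    from alien_rank_arg[OF this, of F f] show ?thesis by simp
  qed
  finally show ?case by simp
qed simp

lemma alien_rank_rstepp: "rstepp C s t \<Longrightarrow> is_trs C \<Longrightarrow> alien_rank (funs_trs C) t \<le> alien_rank (funs_trs C) s"
proof (induction rule: rstepp.induct)
  case (root l r \<sigma>)
  have "vars_term r \<subseteq> vars_term l" using root by (auto simp: is_trs_def)
  moreover have "funs_term r \<subseteq> funs_trs C" using root(1) by (auto simp: funs_trs_def)
  ultimately show ?case by (auto intro: alien_rank_subst_le alien_rank_subst_ge_Var)
next
  case (ctxt i ts t f)
  let ?F = "funs_trs C"
  have arg: "alien_rank ?F (ts ! i) + (if f \<in> ?F then 0 else 1) \<le> alien_rank ?F (Fun f ts)"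
    using ctxt(1) by (intro alien_rank_arg) simp
  show ?case
  proof (rule alien_rank_Fun_le)
    fix u assume "u \<in> set (ts[i := t])"
    then have "u = t \<or> u \<in> set ts" using set_update_subset_insert[of ts i t] by blast
    then show "alien_rank ?F u + (if f \<in> ?F then 0 else 1) \<le> alien_rank ?F (Fun f ts)"
    proof
      assume "u = t"
      then show ?thesis using arg ctxt.IH[OF ctxt.prems] by (cases "f \<in> ?F") auto
    qed (rule alien_rank_arg)
  qed (use arg in simp)
qed

lemma alien_rank_rsteps:
  "(s, t) \<in> (rstep C)\<^sup>* \<Longrightarrow> is_trs C \<Longrightarrow> alien_rank (funs_trs C) t \<le> alien_rank (funs_trs C) s"
  by (induction rule: rtrancl_induct) (auto simp: rstep_eq_rstepp dest!: alien_rank_rstepp)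

lemma inner_rstep_Fun_cases:
  assumes "(Fun f ts, x) \<in> inner_rstep C F"
  obtains i t where "f \<notin> F" "i < length ts" "(ts ! i, t) \<in> rstep C" "x = Fun f (ts[i := t])"
    | i t where "i < length ts" "(ts ! i, t) \<in> inner_rstep C F" "x = Fun f (ts[i := t])"
  using assms by (cases rule: inner_rstep.cases) auto

lemma inner_rsteps_Var: "(Var v, x) \<in> (inner_rstep C F)\<^sup>* \<Longrightarrow> x = Var v"
  by (induction rule: rtrancl_induct) (auto elim: inner_rstep.cases)

lemma inner_rsteps_args:
  "list_all2 (\<lambda>a b. (a, b) \<in> (inner_rstep C F)\<^sup>*) as bs \<Longrightarrow> (Fun f as, Fun f bs) \<in> (inner_rstep C F)\<^sup>*"
  by (rule Fun_args_rtrancl) (auto intro: inner_rstep.ctxt)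

lemma Fun_args_join:
  assumes decomp: "\<And>ts' y. (Fun f ts', y) \<in> S' \<Longrightarrow>
      \<exists>i t. i < length ts' \<and> (ts' ! i, t) \<in> S \<and> y = Fun f (ts'[i := t])"
    and ctxt: "\<And>us i u. i < length us \<Longrightarrow> (us ! i, u) \<in> S \<Longrightarrow> (Fun f us, Fun f (us[i := u])) \<in> S'"
    and join: "\<And>i a b. i < length ts \<Longrightarrow> (ts ! i, a) \<in> S\<^sup>* \<Longrightarrow> (ts ! i, b) \<in> S\<^sup>* \<Longrightarrow>
      \<exists>c. (a, c) \<in> S\<^sup>* \<and> (b, c) \<in> S\<^sup>*"
    and "(Fun f ts, x) \<in> S'\<^sup>*" "(Fun f ts, y) \<in> S'\<^sup>*"
  shows "\<exists>z. (x, z) \<in> S'\<^sup>* \<and> (y, z) \<in> S'\<^sup>*"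
proof -
  obtain xs ys where x: "x = Fun f xs" "list_all2 (\<lambda>a b. (a, b) \<in> S\<^sup>*) ts xs"
    and y: "y = Fun f ys" "list_all2 (\<lambda>a b. (a, b) \<in> S\<^sup>*) ts ys"
    using rtrancl_Fun_args_decomp[OF decomp] assms(4,5) by metis
  have "\<exists>c. (xs ! i, c) \<in> S\<^sup>* \<and> (ys ! i, c) \<in> S\<^sup>*" if "i < length ts" for i
    using join that x(2) y(2) by (auto simp: list_all2_conv_all_nth)
  then obtain c where c: "\<And>i. i < length ts \<Longrightarrow> (xs ! i, c i) \<in> S\<^sup>* \<and> (ys ! i, c i) \<in> S\<^sup>*"
    by metis
  let ?zs = "map c [0..<length ts]"
  have "list_all2 (\<lambda>a b. (a, b) \<in> S\<^sup>*) xs ?zs" "list_all2 (\<lambda>a b. (a, b) \<in> S\<^sup>*) ys ?zs"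
    using c x(2) y(2) by (auto simp: list_all2_conv_all_nth)
  then have "(x, Fun f ?zs) \<in> S'\<^sup>*" "(y, Fun f ?zs) \<in> S'\<^sup>*"
    using Fun_args_rtrancl[OF ctxt] x(1) y(1) by blast+
  then show ?thesis by blast
qed

lemma inner_rsteps_confluent:
  assumes IH: "\<And>u x y. alien_rank F u < n \<Longrightarrow> (u, x) \<in> (rstep C)\<^sup>* \<Longrightarrow> (u, y) \<in> (rstep C)\<^sup>* \<Longrightarrow>
      \<exists>z. (x, z) \<in> (rstep C)\<^sup>* \<and> (y, z) \<in> (rstep C)\<^sup>*"
  shows "alien_rank F t \<le> n \<Longrightarrow> (t, x) \<in> (inner_rstep C F)\<^sup>* \<Longrightarrow> (t, y) \<in> (inner_rstep C F)\<^sup>* \<Longrightarrow>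
    \<exists>z. (x, z) \<in> (inner_rstep C F)\<^sup>* \<and> (y, z) \<in> (inner_rstep C F)\<^sup>*"
proof (induction t arbitrary: x y)
  case (Var v)
  then show ?case using inner_rsteps_Var[OF Var.prems(2)] inner_rsteps_Var[OF Var.prems(3)] by auto
next
  case (Fun f ts)
  have arg: "alien_rank F (ts ! i) + (if f \<in> F then 0 else 1) \<le> n" if "i < length ts" for i
  proof -
    have "ts ! i \<in> set ts" using that by simp
    from alien_rank_arg[OF this, of F f] Fun.prems(1) show ?thesis by linarith
  qed
  show ?case
  proof (cases "f \<in> F")
    case False
    show ?thesis
    proof (rule Fun_args_join[where S = "rstep C"])
      show "\<exists>i t. i < length ts' \<and> (ts' ! i, t) \<in> rstep C \<and> y' = Fun f (ts'[i := t])"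
        if "(Fun f ts', y') \<in> inner_rstep C F" for ts' y'
        using that by (cases rule: inner_rstep_Fun_cases)
          (auto simp: rstep_eq_outer_Un_inner[of _ F])
      show "(Fun f us, Fun f (us[i := u])) \<in> inner_rstep C F"
        if "i < length us" "(us ! i, u) \<in> rstep C" for us i u
        using that False by (rule inner_rstep.alien[rotated])
      show "\<exists>c. (a, c) \<in> (rstep C)\<^sup>* \<and> (b, c) \<in> (rstep C)\<^sup>*"
        if "i < length ts" "(ts ! i, a) \<in> (rstep C)\<^sup>*" "(ts ! i, b) \<in> (rstep C)\<^sup>*" for i a b
        using IH[of "ts ! i"] arg[of i] that False by fastforce
    qed (use Fun.prems in auto)
  next
    case True
    show ?thesis
    proof (rule Fun_args_join[where S = "inner_rstep C F"])
      show "\<exists>i t. i < length ts' \<and> (ts' ! i, t) \<in> inner_rstep C F \<and> y' = Fun f (ts'[i := t])"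
        if "(Fun f ts', y') \<in> inner_rstep C F" for ts' y'
        using that True by (cases rule: inner_rstep_Fun_cases) auto
      show "\<exists>c. (a, c) \<in> (inner_rstep C F)\<^sup>* \<and> (b, c) \<in> (inner_rstep C F)\<^sup>*"
        if "i < length ts" "(ts ! i, a) \<in> (inner_rstep C F)\<^sup>*" "(ts ! i, b) \<in> (inner_rstep C F)\<^sup>*"
        for i a b
        using Fun.IH[of "ts ! i"] arg[of i] that True by fastforce
    qed (use Fun.prems in \<open>auto intro: inner_rstep.ctxt\<close>)
  qed
qed

lemma inner_rsteps_subst:
  "(\<And>v. v \<in> vars_term t \<Longrightarrow> (\<sigma> v, \<tau> v) \<in> (inner_rstep C F)\<^sup>*) \<Longrightarrow>
    (subst t \<sigma>, subst t \<tau>) \<in> (inner_rstep C F)\<^sup>*"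
proof (induction t)
  case (Fun f ts)
  have "(subst t \<sigma>, subst t \<tau>) \<in> (inner_rstep C F)\<^sup>*" if "t \<in> set ts" for t
    using that Fun by auto
  then have "list_all2 (\<lambda>a b. (a, b) \<in> (inner_rstep C F)\<^sup>*)
      (map (\<lambda>t. subst t \<sigma>) ts) (map (\<lambda>t. subst t \<tau>) ts)"
    by (auto simp: list_all2_conv_all_nth)
  then show ?case by (simp add: inner_rsteps_args)
qed simp

lemma inner_rstep_linear_instance:
  "(subst l \<sigma>, x) \<in> inner_rstep C F \<Longrightarrow> linear_term l \<Longrightarrow> funs_term l \<subseteq> F \<Longrightarrow>
    \<exists>\<sigma>'. x = subst l \<sigma>' \<and> (\<forall>v\<in>vars_term l. (\<sigma> v, \<sigma>' v) \<in> (inner_rstep C F)\<^sup>*)"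
proof (induction l arbitrary: x)
  case (Var v)
  show ?case by (rule exI[of _ "\<sigma>(v := x)"]) (use Var in auto)
next
  case (Fun f ls)
  from Fun.prems(1,3) obtain i t where i: "i < length ls"
    and step: "(subst (ls ! i) \<sigma>, t) \<in> inner_rstep C F"
    and x: "x = Fun f ((map (\<lambda>t. subst t \<sigma>) ls)[i := t])"
    by (auto elim: inner_rstep_Fun_cases)
  have "ls ! i \<in> set ls" using i by simp
  with Fun.IH[OF _ step] Fun.prems(2,3) obtain \<sigma>i where \<sigma>i: "t = subst (ls ! i) \<sigma>i"
    "\<forall>v\<in>vars_term (ls ! i). (\<sigma> v, \<sigma>i v) \<in> (inner_rstep C F)\<^sup>*"
    by fastforce
  obtain \<sigma>' where \<sigma>': "\<And>j v. j < length ls \<Longrightarrow> v \<in> vars_term (ls ! j) \<Longrightarrow>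
      \<sigma>' v = (if j = i then \<sigma>i else \<sigma>) v"
    using linear_Fun_merge_subst[OF Fun.prems(2), of "\<lambda>j. if j = i then \<sigma>i else \<sigma>"] by blast
  have "subst (ls ! j) \<sigma>' = (if j = i then t else subst (ls ! j) \<sigma>)" if "j < length ls" for j
    using \<sigma>'[OF that] \<sigma>i(1) by (auto intro: subst_cong)
  then have "x = subst (Fun f ls) \<sigma>'" by (auto simp: x nth_list_update intro!: nth_equalityI)
  moreover have "(\<sigma> v, \<sigma>' v) \<in> (inner_rstep C F)\<^sup>*" if "v \<in> vars_term (Fun f ls)" for v
    using that \<sigma>i(2) \<sigma>' by (fastforce simp: in_set_conv_nth)
  ultimately show ?case by blast
qed

lemma outer_inner_local_commute:
  assumes ll: "left_linear C" and trs: "is_trs C"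
  shows "(s, y) \<in> outer_rstep C (funs_trs C) \<Longrightarrow> (s, x) \<in> inner_rstep C (funs_trs C) \<Longrightarrow>
    \<exists>z. (x, z) \<in> (outer_rstep C (funs_trs C))\<^sup>= \<and> (y, z) \<in> (inner_rstep C (funs_trs C))\<^sup>*"
proof (induction arbitrary: x rule: outer_rstep.induct)
  case (root l r \<sigma>)
  have lin: "linear_term l" and vars: "vars_term r \<subseteq> vars_term l"
    using left_linear_imp_linear_lhs[OF ll root(1)] trs root(1) by (auto simp: is_trs_def)
  from inner_rstep_linear_instance[OF root(2) lin funs_lhs_subset_funs_trs[OF root(1)]]
  obtain \<sigma>' where \<sigma>': "x = subst l \<sigma>'"
    "\<forall>v\<in>vars_term l. (\<sigma> v, \<sigma>' v) \<in> (inner_rstep C (funs_trs C))\<^sup>*" by blast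
  have "(x, subst r \<sigma>') \<in> outer_rstep C (funs_trs C)"
    unfolding \<sigma>'(1) by (rule outer_rstep.root[OF root(1)])
  moreover have "(subst r \<sigma>, subst r \<sigma>') \<in> (inner_rstep C (funs_trs C))\<^sup>*"
    using \<sigma>'(2) vars by (auto intro: inner_rsteps_subst)
  ultimately show ?case by blast
next
  case (ctxt f i ts t)
  let ?O = "outer_rstep C (funs_trs C)" and ?I = "inner_rstep C (funs_trs C)"
  from ctxt.prems ctxt(1) obtain j c where j: "j < length ts" "(ts ! j, c) \<in> ?I"
    and x: "x = Fun f (ts[j := c])"
    by (auto elim: inner_rstep_Fun_cases)
  show ?case
  proof (cases "j = i")
    case True
    with ctxt.IH j obtain z where z: "(c, z) \<in> ?O\<^sup>=" "(t, z) \<in> ?I\<^sup>*" by blast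
    have "(x, Fun f (ts[i := z])) \<in> ?O\<^sup>="
      using z(1) ctxt(1,2) True by (auto simp: x intro: outer_rstep.ctxt[of f _ i "ts[i := c]", simplified])
    moreover have "(Fun f (ts[i := t]), Fun f ((ts[i := t])[i := z])) \<in> ?I\<^sup>*"
      by (rule Fun_arg_rtrancl[OF _ z(2)]) (use ctxt(2) in \<open>auto intro: inner_rstep.ctxt\<close>)
    ultimately show ?thesis by auto
  next
    case False
    have "(x, Fun f ((ts[j := c])[i := t])) \<in> ?O"
      unfolding x using ctxt(1,2,3) False by (intro outer_rstep.ctxt) auto
    moreover have "(Fun f (ts[i := t]), Fun f ((ts[i := t])[j := c])) \<in> ?I"
      using j False by (intro inner_rstep.ctxt) auto
    moreover have "(ts[i := t])[j := c] = (ts[j := c])[i := t]"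
      using False by (rule list_update_swap[symmetric])
    ultimately show ?thesis by auto
  qed
qed

lemma rtrancl_commute_if_strip:
  assumes strip: "\<And>s x y. (s, y) \<in> A \<Longrightarrow> (s, x) \<in> B \<Longrightarrow> \<exists>z. (x, z) \<in> A\<^sup>= \<and> (y, z) \<in> B\<^sup>*"
    and "(s, x) \<in> B\<^sup>*" "(s, y) \<in> A\<^sup>*"
  shows "\<exists>z. (x, z) \<in> A\<^sup>* \<and> (y, z) \<in> B\<^sup>*"
proof -
  have strip_rtrancl: "\<exists>z. (x, z) \<in> A\<^sup>= \<and> (y, z) \<in> B\<^sup>*" if "(s, x) \<in> B\<^sup>*" "(s, y) \<in> A" for s x y
    using that
  proof (induction rule: rtrancl_induct)
    case (step x1 x)
    then obtain z1 where z1: "(x1, z1) \<in> A\<^sup>=" "(y, z1) \<in> B\<^sup>*" by blast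
    show ?case
    proof (cases "x1 = z1")
      case True
      then show ?thesis using z1(2) step(2) by (meson UnCI pair_in_Id_conv rtrancl.rtrancl_into_rtrancl)
    next
      case False
      then obtain z where "(x, z) \<in> A\<^sup>=" "(z1, z) \<in> B\<^sup>*" using strip[OF _ step(2)] z1(1) by blast
      then show ?thesis using z1(2) by (meson rtrancl_trans)
    qed
  qed blast
  from assms(3) show ?thesis
  proof (induction rule: rtrancl_induct)
    case (step y1 y)
    then obtain z1 where z1: "(x, z1) \<in> A\<^sup>*" "(y1, z1) \<in> B\<^sup>*" by blast
    from strip_rtrancl[OF z1(2) step(2)] obtain z where "(z1, z) \<in> A\<^sup>=" "(y, z) \<in> B\<^sup>*" by blast
    then show ?case using z1(1) by (metis Un_iff pair_in_Id_conv rtrancl.rtrancl_into_rtrancl)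
  qed (use assms(2) in blast)
qed

context
  fixes C :: "('f, 'v) trs"
  assumes inf: "infinite (UNIV :: 'v set)" and ll: "left_linear C" and trs: "is_trs C"
    and join_funs_trs: "\<And>s x y. funs_term s \<subseteq> funs_trs C \<Longrightarrow> (s, x) \<in> (rstep C)\<^sup>* \<Longrightarrow>
      (s, y) \<in> (rstep C)\<^sup>* \<Longrightarrow> \<exists>z. (x, z) \<in> (rstep C)\<^sup>* \<and> (y, z) \<in> (rstep C)\<^sup>*"
begin

lemma outer_rsteps_confluent:
  assumes "(t, x) \<in> (outer_rstep C (funs_trs C))\<^sup>*" "(t, y) \<in> (outer_rstep C (funs_trs C))\<^sup>*"
  shows "\<exists>z. (x, z) \<in> (outer_rstep C (funs_trs C))\<^sup>* \<and> (y, z) \<in> (outer_rstep C (funs_trs C))\<^sup>*"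
proof -
  obtain K \<beta> where K: "t = subst K \<beta>" "funs_term K \<subseteq> funs_trs C" "alien_subst (funs_trs C) \<beta>"
    using obtain_alien_abstraction[OF inf] by metis
  obtain Kx Ky where Kx: "(K, Kx) \<in> (rstep C)\<^sup>*" "x = subst Kx \<beta>"
    and Ky: "(K, Ky) \<in> (rstep C)\<^sup>*" "y = subst Ky \<beta>"
    using outer_rsteps_project[OF ll trs K(3)] assms K(1,2) by metis
  obtain J where J: "(Kx, J) \<in> (rstep C)\<^sup>*" "(Ky, J) \<in> (rstep C)\<^sup>*"
    using join_funs_trs[OF K(2) Kx(1) Ky(1)] by blast
  have "funs_term Kx \<subseteq> funs_trs C" "funs_term Ky \<subseteq> funs_trs C"
    using rsteps_preserve_funs_trs[OF _ trs K(2)] Kx(1) Ky(1) by auto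
  then show ?thesis using rsteps_lift_outer[OF trs] J Kx(2) Ky(2) by blast
qed

text \<open>On terms of alien rank at most \<open>n\<close>, outer steps followed by inner steps have the
  diamond property: outer peaks are joined by projecting them onto the abstracted C-context,
  inner peaks by the induction hypothesis for the smaller rank of the aliens, and outer and
  inner steps commute.\<close>

lemma joinable_if_alien_rank_le:
  "alien_rank (funs_trs C) t \<le> n \<Longrightarrow> (t, x) \<in> (rstep C)\<^sup>* \<Longrightarrow> (t, y) \<in> (rstep C)\<^sup>* \<Longrightarrow>
    \<exists>z. (x, z) \<in> (rstep C)\<^sup>* \<and> (y, z) \<in> (rstep C)\<^sup>*"
proof (induction n arbitrary: t x y rule: less_induct)
  case (less n)
  let ?F = "funs_trs C"
  let ?O = "outer_rstep C ?F" and ?I = "inner_rstep C ?F"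
  define D where "D = ?O\<^sup>* O ?I\<^sup>*"
  have O_I_rsteps: "?O\<^sup>* \<subseteq> (rstep C)\<^sup>*" "?I\<^sup>* \<subseteq> (rstep C)\<^sup>*"
    unfolding rstep_eq_outer_Un_inner[of C ?F] by (simp_all add: rtrancl_mono)
  then have "D \<subseteq> (rstep C)\<^sup>*" unfolding D_def by (auto intro: rtrancl_trans)
  moreover have "rstep C \<subseteq> D" using rstep_eq_outer_Un_inner[of C ?F] unfolding D_def by auto
  ultimately have D_rsteps: "D\<^sup>* = (rstep C)\<^sup>*" by (rule rtrancl_subset[rotated])
  have closed: "alien_rank ?F b \<le> n" if "alien_rank ?F a \<le> n" "(a, b) \<in> D" for a b
    using that \<open>D \<subseteq> (rstep C)\<^sup>*\<close> alien_rank_rsteps[OF _ trs] by fastforce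
  have diamond: "\<exists>d. (b, d) \<in> D \<and> (c, d) \<in> D" if a: "alien_rank ?F a \<le> n" "(a, b) \<in> D" "(a, c) \<in> D"
    for a b c
  proof -
    from a obtain a1 a2 where a1: "(a, a1) \<in> ?O\<^sup>*" "(a1, b) \<in> ?I\<^sup>*" and a2: "(a, a2) \<in> ?O\<^sup>*" "(a2, c) \<in> ?I\<^sup>*"
      unfolding D_def by blast
    obtain e where e: "(a1, e) \<in> ?O\<^sup>*" "(a2, e) \<in> ?O\<^sup>*" using outer_rsteps_confluent a1(1) a2(1) by blast
    have commute: "\<exists>z. (x, z) \<in> ?O\<^sup>* \<and> (y, z) \<in> ?I\<^sup>*" if "(s, x) \<in> ?I\<^sup>*" "(s, y) \<in> ?O\<^sup>*"
      for s x y
      using rtrancl_commute_if_strip[of ?O ?I, OF _ that] outer_inner_local_commute[OF ll trs] by blast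
    obtain b' c' where b': "(b, b') \<in> ?O\<^sup>*" "(e, b') \<in> ?I\<^sup>*" and c': "(c, c') \<in> ?O\<^sup>*" "(e, c') \<in> ?I\<^sup>*"
      using commute[OF a1(2) e(1)] commute[OF a2(2) e(2)] by blast
    have "(a, e) \<in> D" unfolding D_def using a1(1) e(1) by (meson relcompI rtrancl_refl rtrancl_trans)
    then have rank_e: "alien_rank ?F e \<le> n" using closed[OF a(1)] by blast
    have IH: "\<exists>z. (x, z) \<in> (rstep C)\<^sup>* \<and> (y, z) \<in> (rstep C)\<^sup>*"
      if "alien_rank ?F u < n" "(u, x) \<in> (rstep C)\<^sup>*" "(u, y) \<in> (rstep C)\<^sup>*" for u x y
      using less.IH[OF that(1) order.refl that(2,3)] .
    have "\<exists>k. (b', k) \<in> ?I\<^sup>* \<and> (c', k) \<in> ?I\<^sup>*"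
      by (rule inner_rsteps_confluent[OF _ rank_e b'(2) c'(2)]) (fact IH)
    then obtain k where "(b', k) \<in> ?I\<^sup>*" "(c', k) \<in> ?I\<^sup>*" by blast
    then show ?thesis using b'(1) c'(1) unfolding D_def by blast
  qed
  have "\<exists>d. (x, d) \<in> D\<^sup>* \<and> (y, d) \<in> D\<^sup>*"
    by (rule diamond_imp_confluent_on[of "{t. alien_rank ?F t \<le> n}" D t x y])
      (use diamond closed less.prems D_rsteps in auto)
  then show ?case unfolding D_rsteps .
qed

theorem confluent_if_joinable_on_funs_trs: "confluent C"
  using joinable_if_alien_rank_le[OF order.refl] by (rule confluentI)

end

theorem confluent_subsystem_if_confluent:
  fixes R C :: "('f, 'v) trs"
  assumes inf: "infinite (UNIV :: 'v set)" and trs: "is_trs R" and ll: "left_linear R"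
    and CR: "C \<subseteq> R" and restr: "\<forall>(l, r) \<in> restrict_trs R C. (l, r) \<in> (rstep C)\<^sup>*"
    and conf: "confluent R"
  shows "confluent C"
proof (rule confluent_if_joinable_on_funs_trs[OF inf])
  show "left_linear C" "is_trs C" using left_linear_subset[OF ll CR] is_trs_subset[OF trs CR] .
  then show "\<exists>z. (x, z) \<in> (rstep C)\<^sup>* \<and> (y, z) \<in> (rstep C)\<^sup>*"
    if "funs_term s \<subseteq> funs_trs C" "(s, x) \<in> (rstep C)\<^sup>*" "(s, y) \<in> (rstep C)\<^sup>*" for s x y
    using confluent_join_from_funs_trs[OF _ CR restr conf that] by blast
qed

theorem corollary15:
  fixes R C :: "('f, 'v) trs"
  assumes "infinite (UNIV :: 'v set)"
    and "is_trs R" and "left_linear R"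
    and "C \<subseteq> R"
    and "\<forall>(t, u) \<in> pcps R. (t, u) \<in> conv C"
    and "\<forall>(l, r) \<in> restrict_trs R C. (l, r) \<in> (rstep C)\<^sup>*"
  shows "confluent R \<longleftrightarrow> confluent C"
  using confluent_subsystem_if_confluent[OF assms(1-4,6)]
    confluent_if_confluent_subsystem[OF assms(1-3,5,4)] by blast

end
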